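(* Consider $\min_{\beta\in\mathbb{R}^p} f(\beta)+\sum_{j=1}^p g_j(\beta_j)$ under the following hypotheses: $f$ is convex, differentiable, with $|\nabla_j f(x+he_j)-\nabla_j f(x)|\le L_j|h|$ ($L_j>0$); each $g_j$ is proper, closed, lower bounded and $g_j/L_j+\frac{\alpha}{2}(\cdot)^2$ is convex for some $\alpha<1$; cyclic proximal coordinate descent converges to a critical point $\hat\beta$; with $\mathcal{S}=\mathrm{gsupp}(\hat\beta)=\{j_1,\dots,j_{|\mathcal{S}|}\}$, $-\nabla_j f(\hat\beta)\in\mathrm{interior}(\partial g_j(\hat\beta_j))$ for $j\notin\mathcal{S}$, $f$ is $\mathcal{C}^3$ near $\hat\beta$, $g_j$ is $\mathcal{C}^3$ near $\hat\beta_j$ for $j\in\mathcal{S}$, and $M:=\nabla^2_{\mathcal{S},\mathcal{S}}f(\hat\beta)+\nabla^2_{\mathcal{S},\mathcal{S}}g(\hat\beta)\succ0$. Let $\gamma_j=1/L_j$ and let $\psi=\mathcal{P}^{(|\mathcal{S}|)}\circ\cdots\circ\mathcal{P}^{(1)}:\mathbb{R}^{|\mathcal{S}|}\to\mathbb{R}^{|\mathcal{S}|}$ be as defined in the context. Then $\psi$ is twice differentiable at $\hat\beta_{\mathcal{S}}$ with Jacobian $\mathcal{J}\psi(\hat\beta_{\mathcal{S}})=M^{-1/2}(\mathrm{Id}-B^{(|\mathcal{S}|)})\cdots(\mathrm{Id}-B^{(1)})M^{1/2}$, where for $s\in[|\mathcal{S}|]$, $B^{(s)}=M^{1/2}_{:s}\,\frac{\gamma_{j_s}}{1+\gamma_{j_s}g_{j_s}''(\hat\beta_{j_s})}\,(M^{1/2}_{:s})^\top\in\mathbb{R}^{|\mathcal{S}|\times|\mathcal{S}|}$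 and $M^{1/2}_{:s}$ is the $s$-th column of $M^{1/2}$.
   Context: $\partial$ is the Fréchet subdifferential, critical point means $-\nabla f(x)\in\partial g(x)$ with $g(\beta)=\sum_jg_j(\beta_j)$, and $\mathrm{gsupp}(\beta)=\{j:\partial g_j(\beta_j)\text{ is a singleton}\}$. $\nabla^2_{\mathcal{S},\mathcal{S}}g(\hat\beta)=\mathrm{diag}(g_j''(\hat\beta_j))_{j\in\mathcal{S}}$. Cyclic proximal coordinate descent updates, for $j=1,\dots,p$ in turn, $\beta_j\leftarrow\mathrm{prox}_{g_j/L_j}(\beta_j-\nabla_jf(\beta)/L_j)$, with $\mathrm{prox}_h(z)=\arg\min_u\frac12(u-z)^2+h(u)$. Define $\pi:\mathbb{R}^{|\mathcal{S}|}\to\mathbb{R}^p$ by $\pi(u)_{j_s}=u_s$ and $\pi(u)_j=\hat\beta_j$ for $j\notin\mathcal{S}$. For $s\in[|\mathcal{S}|]$, $\mathcal{P}^{(s)}:\mathbb{R}^{|\mathcal{S}|}\to\mathbb{R}^{|\mathcal{S}|}$ is given by $(\mathcal{P}^{(s)}(u))_{s'}=u_{s'}$ for $s'\ne s$ and $(\mathcal{P}^{(s)}(u))_s=\mathrm{prox}_{\gamma_{j_s}g_{j_s}}(u_s-\gamma_{j_s}\nabla_{j_s}f(\pi(u)))$. *)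

theory Defs
  imports "HOL-Analysis.Analysis"
begin

definition proper_fn :: "('a \<Rightarrow> ereal) \<Rightarrow> bool" where
  "proper_fn h \<longleftrightarrow> (\<forall>x. h x \<noteq> -\<infinity>) \<and> (\<exists>x. h x \<noteq> \<infinity>)"

text \<open>Closed = lower semicontinuous.\<close>
definition lsc_fn :: "('a::topological_space \<Rightarrow> ereal) \<Rightarrow> bool" where
  "lsc_fn h \<longleftrightarrow> (\<forall>x c. c < h x \<longrightarrow> (\<forall>\<^sub>F y in nhds x. c < h y))"

definition lower_bounded_fn :: "('a \<Rightarrow> ereal) \<Rightarrow> bool" where
  "lower_bounded_fn h \<longleftrightarrow> (\<exists>c::real. \<forall>x. ereal c \<le> h x)"

definition ereal_convex :: "(real \<Rightarrow> ereal) \<Rightarrow> bool" where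
  "ereal_convex h \<longleftrightarrow> (\<forall>x y t. 0 \<le> t \<and> t \<le> 1 \<longrightarrow>
      h ((1 - t) * x + t * y) \<le> ereal (1 - t) * h x + ereal t * h y)"

definition fsubdiff :: "('a::real_inner \<Rightarrow> ereal) \<Rightarrow> 'a \<Rightarrow> 'a set" where
  "fsubdiff h x = (if \<bar>h x\<bar> = \<infinity> then {} else
     {v. \<forall>e>0. \<exists>d>0. \<forall>y. dist y x < d \<longrightarrow>
            h x + ereal (inner v (y - x) - e * norm (y - x)) \<le> h y})"

definition gsupp :: "('n \<Rightarrow> real \<Rightarrow> ereal) \<Rightarrow> real^'n \<Rightarrow> 'n set" where
  "gsupp g \<beta> = {j. \<exists>v. fsubdiff (g j) (\<beta> $ j) = {v}}"

definition prox :: "(real \<Rightarrow> ereal) \<Rightarrow> real \<Rightarrow> real" where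
  "prox h z = (THE u. \<forall>v. ereal ((u - z)\<^sup>2 / 2) + h u \<le> ereal ((v - z)\<^sup>2 / 2) + h v)"

definition vupd :: "real^'n \<Rightarrow> 'n \<Rightarrow> real \<Rightarrow> real^'n" where
  "vupd x j a = (\<chi> i. if i = j then a else x $ i)"

text \<open>One epoch of cyclic proximal coordinate descent, coordinates in increasing order;
  df is the gradient of f, L the coordinatewise Lipschitz constants.\<close>
definition cd_epoch :: "((real, 'n::{finite,linorder}) vec \<Rightarrow> (real, 'n) vec) \<Rightarrow> ('n \<Rightarrow> real \<Rightarrow> ereal)
    \<Rightarrow> ('n \<Rightarrow> real) \<Rightarrow> (real, 'n) vec \<Rightarrow> (real, 'n) vec" where
  "cd_epoch df g L \<beta> =
     fold (\<lambda>j b. vupd b j (prox (\<lambda>u. ereal (1 / L j) * g j u) (b $ j - (df b $ j) / L j)))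
          (sorted_list_of_set UNIV) \<beta>"

definition C3_on :: "'a::real_normed_vector set \<Rightarrow> ('a \<Rightarrow> 'b::real_normed_vector) \<Rightarrow> bool" where
  "C3_on U h \<longleftrightarrow> (\<exists>(D1 :: 'a \<Rightarrow> 'a \<Rightarrow>\<^sub>L 'b) (D2 :: 'a \<Rightarrow> 'a \<Rightarrow>\<^sub>L ('a \<Rightarrow>\<^sub>L 'b))
       (D3 :: 'a \<Rightarrow> 'a \<Rightarrow>\<^sub>L ('a \<Rightarrow>\<^sub>L ('a \<Rightarrow>\<^sub>L 'b))).
     (\<forall>x\<in>U. (h has_derivative blinfun_apply (D1 x)) (at x)) \<and>
     (\<forall>x\<in>U. (D1 has_derivative blinfun_apply (D2 x)) (at x)) \<and>
     (\<forall>x\<in>U. (D2 has_derivative blinfun_apply (D3 x)) (at x)) \<and>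
     continuous_on U D3)"

definition pos_def_mat :: "real^'s^'s \<Rightarrow> bool" where
  "pos_def_mat A \<longleftrightarrow> transpose A = A \<and> (\<forall>x. x \<noteq> 0 \<longrightarrow> 0 < x \<bullet> (A *v x))"

definition pos_semidef_mat :: "real^'s^'s \<Rightarrow> bool" where
  "pos_semidef_mat A \<longleftrightarrow> transpose A = A \<and> (\<forall>x. 0 \<le> x \<bullet> (A *v x))"

definition mat_sqrt :: "real^'s^'s \<Rightarrow> real^'s^'s" where
  "mat_sqrt A = (THE R. pos_semidef_mat R \<and> R ** R = A)"

definition twice_differentiable_at :: "(real^'m \<Rightarrow> real^'k) \<Rightarrow> real^'m \<Rightarrow> bool" where
  "twice_differentiable_at h x \<longleftrightarrow> (\<exists>D. (\<forall>\<^sub>F y in nhds x. (h has_derivative D y) (at y))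
      \<and> (\<lambda>y. matrix (D y)) differentiable (at x))"

definition emb :: "('s \<Rightarrow> 'n) \<Rightarrow> real^'n \<Rightarrow> real^'s \<Rightarrow> real^'n" where
  "emb js bh u = (\<chi> j. if j \<in> range js then u $ (inv js j) else bh $ j)"

definition Pmap :: "(real^'n \<Rightarrow> real^'n) \<Rightarrow> ('n \<Rightarrow> real \<Rightarrow> ereal) \<Rightarrow> ('n \<Rightarrow> real)
    \<Rightarrow> ('s \<Rightarrow> 'n) \<Rightarrow> real^'n \<Rightarrow> 's \<Rightarrow> real^'s \<Rightarrow> real^'s" where
  "Pmap df g \<gamma> js bh s u = vupd u s
      (prox (\<lambda>v. ereal (\<gamma> (js s)) * g (js s) v) (u $ s - \<gamma> (js s) * (df (emb js bh u) $ js s)))"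

definition psi_map :: "((real, 'n::finite) vec \<Rightarrow> (real, 'n) vec) \<Rightarrow> ('n \<Rightarrow> real \<Rightarrow> ereal) \<Rightarrow> ('n \<Rightarrow> real)
    \<Rightarrow> ('s \<Rightarrow> 'n) \<Rightarrow> (real, 'n) vec \<Rightarrow> (real, 's::{finite,linorder}) vec \<Rightarrow> (real, 's) vec" where
  "psi_map df g \<gamma> js bh u = fold (\<lambda>s v. Pmap df g \<gamma> js bh s v) (sorted_list_of_set UNIV) u"

end

theory Submission
  imports Defs
begin

text \<open>Since \<open>\<gamma> g\<^sub>j + \<alpha>/2 (\<cdot>)\<^sup>2\<close> is convex with \<open>\<alpha> < 1\<close>, the proximal objective is strongly
  convex, and where \<open>g\<^sub>j\<close> is smooth the proximal map is the local inverse of the increasing map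
  \<open>u \<mapsto> u + \<gamma> g\<^sub>j'(u)\<close>; it is therefore twice differentiable with derivative
  \<open>1 / (1 + \<gamma> g\<^sub>j'')\<close>. On the generalized support the subdifferential is the singleton
  \<open>{g\<^sub>j'}\<close>, so criticality gives \<open>g\<^sub>j'(\<beta>\<^sub>j) = -\<nabla>\<^sub>j f(\<beta>)\<close> and \<open>\<beta>\<^sub>S\<close> is a common
  fixed point of all \<open>P\<^sub>s\<close>. By the chain rule the Jacobian of \<open>P\<^sub>s\<close> at \<open>\<beta>\<^sub>S\<close> is the
  identity with row \<open>s\<close> replaced by \<open>e\<^sub>s - \<gamma>/(1 + \<gamma> g\<^sub>j'')\<close> times row \<open>s\<close> of \<open>M\<close>, and conjugation by
  the symmetric square root \<open>R\<close> of \<open>M = R\<^sup>2\<close> turns it into \<open>Id - B\<^sub>s\<close>. The Jacobians multiply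
  along the composition.\<close>

section \<open>Square roots of positive semidefinite matrices\<close>

lemma inner_symmetric_matrix:
  fixes A :: "real^'n^'n"
  assumes "transpose A = A"
  shows "x \<bullet> (A *v y) = (A *v x) \<bullet> y"
  by (metis assms dot_lmul_matrix vector_transpose_matrix)

lemma linear_le_quadratic_imp_zero:
  fixes a K :: real
  assumes "\<And>t. 2 * t * a \<le> t\<^sup>2 * K"
  shows "a = 0"
proof (rule ccontr)
  assume "a \<noteq> 0"
  define c where "c = \<bar>K\<bar> + 1"
  have c: "c > 0" "K < c" unfolding c_def by auto
  have "2 * (a / c) * a \<le> (a / c)\<^sup>2 * K" by (rule assms)
  then have "2 * a\<^sup>2 * c \<le> a\<^sup>2 * K" using c by (simp add: field_simps power2_eq_square)
  moreover have "a\<^sup>2 > 0" using \<open>a \<noteq> 0\<close> by simp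
  ultimately have "2 * c \<le> K" by (simp add: mult.commute)
  with c show False by linarith
qed

lemma quadratic_form_max_on_subspace:
  fixes A :: "real^'n^'n"
  assumes "subspace V" "V \<noteq> {0}"
  obtains x0 where "x0 \<in> V" "x0 \<bullet> x0 = 1" "\<forall>w\<in>V. w \<bullet> (A *v w) \<le> (x0 \<bullet> (A *v x0)) * (w \<bullet> w)"
proof -
  obtain v where v: "v \<in> V" "v \<noteq> 0" using assms subspace_0 by blast
  define S where "S = sphere (0::real^'n) 1 \<inter> V"
  have "compact S" unfolding S_def using closed_subspace[OF assms(1)]
    by (intro compact_Int_closed) auto
  moreover have "(1 / norm v) *\<^sub>R v \<in> S" unfolding S_def using v assms(1)
    by (auto simp: subspace_scale)
  moreover have "continuous_on S (\<lambda>x. x \<bullet> (A *v x))"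
    by (intro continuous_intros linear_continuous_on matrix_vector_mul_bounded_linear)
  ultimately obtain x0 where x0S: "x0 \<in> S" and x0max: "\<forall>y\<in>S. y \<bullet> (A *v y) \<le> x0 \<bullet> (A *v x0)"
    using continuous_attains_sup[of S] by blast
  have "w \<bullet> (A *v w) \<le> (x0 \<bullet> (A *v x0)) * (w \<bullet> w)" if "w \<in> V" for w
  proof (cases "w = 0")
    case False
    have "(1 / norm w) *\<^sub>R w \<in> S" unfolding S_def using \<open>w \<in> V\<close> False assms(1)
      by (auto simp: subspace_scale)
    then have "((1 / norm w) *\<^sub>R w) \<bullet> (A *v ((1 / norm w) *\<^sub>R w)) \<le> x0 \<bullet> (A *v x0)"
      using x0max by blast
    then have "(w \<bullet> (A *v w)) / (norm w)\<^sup>2 \<le> x0 \<bullet> (A *v x0)"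
      by (simp add: matrix_vector_mult_scaleR power2_eq_square)
    then show ?thesis using False by (simp add: dot_square_norm divide_le_eq mult.commute)
  qed simp
  moreover have "x0 \<in> V" "x0 \<bullet> x0 = 1" using x0S unfolding S_def by (auto simp: dot_square_norm)
  ultimately show ?thesis using that by blast
qed

text \<open>The maximum of the Rayleigh quotient is an eigenvalue: perturbing the maximizer \<open>x\<^sub>0\<close>
  along \<open>y = A x\<^sub>0 - \<lambda> x\<^sub>0\<close> would otherwise increase the quotient to first order.\<close>

lemma symmetric_matrix_max_quadratic_form_eigenvector:
  fixes A :: "real^'n^'n"
  assumes sym: "transpose A = A" and V: "subspace V" "A *v x0 \<in> V" "x0 \<in> V" and x0x0: "x0 \<bullet> x0 = 1"
    and bound: "\<forall>w\<in>V. w \<bullet> (A *v w) \<le> (x0 \<bullet> (A *v x0)) * (w \<bullet> w)"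
  shows "A *v x0 = (x0 \<bullet> (A *v x0)) *\<^sub>R x0"
proof -
  define lam where "lam = x0 \<bullet> (A *v x0)"
  define y where "y = A *v x0 - lam *\<^sub>R x0"
  have yV: "y \<in> V" unfolding y_def using V by (simp add: subspace_diff subspace_scale)
  have yx0: "y \<bullet> x0 = 0" unfolding y_def lam_def
    by (simp add: inner_diff_left inner_diff_right x0x0 inner_commute)
  have "A *v x0 = y + lam *\<^sub>R x0" unfolding y_def by simp
  then have yA: "y \<bullet> (A *v x0) = y \<bullet> y" by (simp add: inner_add_right yx0)
  have "2 * t * (y \<bullet> y) \<le> t\<^sup>2 * (lam * (y \<bullet> y) - y \<bullet> (A *v y))" for t
  proof -
    have "x0 + t *\<^sub>R y \<in> V" using V yV by (simp add: subspace_add subspace_scale)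
    then have "(x0 + t *\<^sub>R y) \<bullet> (A *v (x0 + t *\<^sub>R y)) \<le> lam * ((x0 + t *\<^sub>R y) \<bullet> (x0 + t *\<^sub>R y))"
      using bound unfolding lam_def by blast
    moreover have "x0 \<bullet> (A *v y) = y \<bullet> (A *v x0)"
      using inner_symmetric_matrix[OF sym, of x0 y] by (simp add: inner_commute)
    ultimately show ?thesis
      by (simp add: matrix_vector_right_distrib matrix_vector_mult_scaleR inner_add_left inner_add_right
          yA x0x0 lam_def[symmetric] yx0 inner_commute[of x0 y] power2_eq_square algebra_simps)
  qed
  then have "y \<bullet> y = 0" by (rule linear_le_quadratic_imp_zero)
  then show ?thesis unfolding y_def lam_def by simp
qed

lemma symmetric_matrix_orthonormal_eigenbasis_subspace:
  fixes A :: "real^'n^'n"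
  assumes sym: "transpose A = A"
  shows "subspace V \<Longrightarrow> (\<forall>x\<in>V. A *v x \<in> V) \<Longrightarrow> \<exists>B. finite B \<and> B \<subseteq> V \<and> pairwise orthogonal B
     \<and> (\<forall>b\<in>B. norm b = 1 \<and> A *v b = (b \<bullet> (A *v b)) *\<^sub>R b) \<and> span B = V"
proof (induction "dim V" arbitrary: V rule: less_induct)
  case less
  show ?case
  proof (cases "V = {0}")
    case True then show ?thesis by (intro exI[of _ "{}"]) auto
  next
    case False
    then obtain x0 where x0V: "x0 \<in> V" and x0x0: "x0 \<bullet> x0 = 1"
      and "\<forall>w\<in>V. w \<bullet> (A *v w) \<le> (x0 \<bullet> (A *v x0)) * (w \<bullet> w)"
      using quadratic_form_max_on_subspace less.prems(1) by blast
    then obtain lam where eig: "A *v x0 = lam *\<^sub>R x0"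
      using symmetric_matrix_max_quadratic_form_eigenvector[OF sym less.prems(1)] less.prems(2) by blast
    define W where "W = {w\<in>V. x0 \<bullet> w = 0}"
    have subW: "subspace W" unfolding W_def subspace_def using less.prems(1)
      by (auto simp: subspace_0 subspace_add subspace_scale inner_add_right)
    have invW: "\<forall>x\<in>W. A *v x \<in> W"
      using less.prems(2) inner_symmetric_matrix[OF sym, of x0] eig by (simp add: W_def)
    have "W \<subseteq> V" "x0 \<in> V - W" using x0V x0x0 unfolding W_def by auto
    then have "W \<subset> V" by blast
    then have "span W \<subset> span V" using subW less.prems(1) by (simp add: span_eq_iff[THEN iffD2])
    then have "dim W < dim V" by (rule dim_psubset)
    from less.hyps[OF this subW invW] obtain B' where B':
      "finite B'" "B' \<subseteq> W" "pairwise orthogonal B'"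
      "\<forall>b\<in>B'. norm b = 1 \<and> A *v b = (b \<bullet> (A *v b)) *\<^sub>R b" "span B' = W" by blast
    show ?thesis
    proof (intro exI[of _ "insert x0 B'"] conjI)
      show "finite (insert x0 B')" "insert x0 B' \<subseteq> V" using B' x0V unfolding W_def by auto
      show "pairwise orthogonal (insert x0 B')"
        using B'(2,3) unfolding pairwise_insert W_def orthogonal_def by (auto simp: inner_commute)
      show "\<forall>b\<in>insert x0 B'. norm b = 1 \<and> A *v b = (b \<bullet> (A *v b)) *\<^sub>R b"
        using B'(4) x0x0 eig by (auto simp: norm_eq_sqrt_inner)
      show "span (insert x0 B') = V"
      proof
        show "span (insert x0 B') \<subseteq> V" using B'(2) x0V less.prems(1) unfolding W_def
          by (intro span_minimal) auto
        show "V \<subseteq> span (insert x0 B')"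
        proof
          fix v assume "v \<in> V"
          then have "v - (x0 \<bullet> v) *\<^sub>R x0 \<in> W" unfolding W_def using x0V less.prems(1)
            by (simp add: subspace_diff subspace_scale inner_diff_right x0x0)
          then show "v \<in> span (insert x0 B')" using B'(5) span_breakdown_eq by blast
        qed
      qed
    qed
  qed
qed

lemma inner_orthonormal_sum:
  fixes B :: "'a::real_inner set"
  assumes "finite B" "pairwise orthogonal B" "\<forall>b\<in>B. norm b = 1" "c \<in> B"
  shows "c \<bullet> (\<Sum>b\<in>B. f b *\<^sub>R b) = f c"
proof -
  have "c \<bullet> (\<Sum>b\<in>B. f b *\<^sub>R b) = (\<Sum>b\<in>B. if b = c then f b else 0)"
    unfolding inner_sum_right
  proof (rule sum.cong)
    fix b assume "b \<in> B"
    then show "c \<bullet> f b *\<^sub>R b = (if b = c then f b else 0)"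
      using assms(2-4) unfolding pairwise_def orthogonal_def by (auto simp: dot_square_norm)
  qed simp
  then show ?thesis using assms(1,4) by simp
qed

lemma orthonormal_basis_expansion:
  fixes B :: "(real^'n) set"
  assumes "finite B" "pairwise orthogonal B" "\<forall>b\<in>B. norm b = 1" "span B = UNIV"
  shows "v = (\<Sum>b\<in>B. (b \<bullet> v) *\<^sub>R b)"
proof -
  obtain u where u: "v = (\<Sum>b\<in>B. u b *\<^sub>R b)" using span_finite[OF assms(1)] assms(4) by auto
  then have "\<And>c. c \<in> B \<Longrightarrow> c \<bullet> v = u c" using inner_orthonormal_sum[OF assms(1-3)] by simp
  then show ?thesis by (subst u) (auto intro!: sum.cong)
qed

lemma pos_semidef_quadratic_zero:
  fixes S :: "real^'n^'n"
  assumes "pos_semidef_mat S" "y \<bullet> (S *v y) = 0"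
  shows "S *v y = 0"
proof -
  have sym: "transpose S = S" and nonneg: "\<And>x. 0 \<le> x \<bullet> (S *v x)"
    using assms(1) unfolding pos_semidef_mat_def by auto
  have "z \<bullet> (S *v y) = 0" for z
  proof -
    have "2 * t * (- (z \<bullet> (S *v y))) \<le> t\<^sup>2 * (z \<bullet> (S *v z))" for t
    proof -
      have "y \<bullet> (S *v z) = z \<bullet> (S *v y)"
        using inner_symmetric_matrix[OF sym, of y z] by (simp add: inner_commute)
      then show ?thesis using nonneg[of "y + t *\<^sub>R z"] assms(2)
        by (simp add: matrix_vector_right_distrib matrix_vector_mult_scaleR inner_add_left inner_add_right
             power2_eq_square algebra_simps)
    qed
    then show ?thesis using linear_le_quadratic_imp_zero by fastforce
  qed
  from this[of "S *v y"] show ?thesis by simp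
qed

lemma orthonormal_eigenbasis_sqrt:
  fixes A :: "real^'n^'n"
  assumes B: "finite B" "pairwise orthogonal B" "span B = UNIV"
    and eig: "\<forall>b\<in>B. norm b = 1 \<and> A *v b = lam b *\<^sub>R b \<and> 0 \<le> lam b"
  shows "\<exists>R. pos_semidef_mat R \<and> R ** R = A \<and> (\<forall>w mu. A *v w = mu *\<^sub>R w \<longrightarrow> R *v w = sqrt mu *\<^sub>R w)"
proof -
  have unit: "\<forall>b\<in>B. norm b = 1" using eig by blast
  note expand = orthonormal_basis_expansion[OF B(1,2) unit B(3)]
  note coeff = inner_orthonormal_sum[OF B(1,2) unit]
  have spectral: "A *v v = (\<Sum>b\<in>B. (lam b * (b \<bullet> v)) *\<^sub>R b)" for v
    by (subst expand[of v]) (simp add: vec.sum matrix_vector_mult_scaleR eig mult.commute cong: sum.cong)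
  define Rf where "Rf v = (\<Sum>b\<in>B. (sqrt (lam b) * (b \<bullet> v)) *\<^sub>R b)" for v
  have "linear Rf"
    by (rule linearI) (simp_all add: Rf_def inner_add_right scaleR_add_left sum.distrib
         distrib_left scaleR_sum_right algebra_simps)
  define R where "R = matrix Rf"
  have Rv: "R *v v = Rf v" for v unfolding R_def by (simp add: matrix_vector_mul(2)[OF \<open>linear Rf\<close>])
  have "(R ** R) *v v = A *v v" for v
  proof -
    have "(R ** R) *v v = (\<Sum>b\<in>B. (sqrt (lam b) * (sqrt (lam b) * (b \<bullet> v))) *\<^sub>R b)"
      unfolding Rf_def[of "Rf v"] by (simp add: Rv Rf_def coeff flip: matrix_vector_mul_assoc cong: sum.cong)
    also have "\<dots> = A *v v" unfolding spectral
      by (rule sum.cong) (auto simp: eig mult.assoc[symmetric])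
    finally show ?thesis .
  qed
  then have RR: "R ** R = A" by (simp add: matrix_eq)
  have "transpose R = R"
    unfolding R_def transpose_def matrix_def Rf_def
    by (simp add: vec_eq_iff sum_component inner_axis mult.commute mult.left_commute)
  moreover have "0 \<le> x \<bullet> (R *v x)" for x
  proof -
    have "x \<bullet> (R *v x) = (\<Sum>b\<in>B. sqrt (lam b) * (b \<bullet> x) * (b \<bullet> x))"
      by (simp add: Rv Rf_def inner_sum_right inner_commute mult.assoc)
    also have "\<dots> \<ge> 0" using eig by (intro sum_nonneg) (auto simp: mult.assoc)
    finally show ?thesis .
  qed
  ultimately have "pos_semidef_mat R" unfolding pos_semidef_mat_def by blast
  moreover have "R *v w = sqrt mu *\<^sub>R w" if "A *v w = mu *\<^sub>R w" for w mu
  proof -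
    have "lam c * (c \<bullet> w) = mu * (c \<bullet> w)" if "c \<in> B" for c
      using arg_cong[OF \<open>A *v w = mu *\<^sub>R w\<close>, of "inner c"] by (simp add: spectral coeff[OF that])
    then have "sqrt (lam c) * (c \<bullet> w) = sqrt mu * (c \<bullet> w)" if "c \<in> B" for c
      using that by (cases "c \<bullet> w = 0") auto
    then have "R *v w = (\<Sum>b\<in>B. (sqrt mu * (b \<bullet> w)) *\<^sub>R b)" unfolding Rv Rf_def
      by (auto intro!: sum.cong)
    also have "\<dots> = sqrt mu *\<^sub>R w" by (subst (2) expand) (simp add: scaleR_sum_right)
    finally show ?thesis .
  qed
  ultimately show ?thesis using RR by blast
qed

lemma pos_semidef_sqrt_exists:
  fixes A :: "real^'n^'n"
  assumes "pos_semidef_mat A"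
  shows "\<exists>R. pos_semidef_mat R \<and> R ** R = A \<and> (\<forall>T. T ** A = A ** T \<longrightarrow> R ** T = T ** R)"
proof -
  have sym: "transpose A = A" and nonneg: "\<And>x. 0 \<le> x \<bullet> (A *v x)"
    using assms unfolding pos_semidef_mat_def by auto
  obtain B where B: "finite B" "pairwise orthogonal B" "span B = UNIV"
    and eig: "\<forall>b\<in>B. norm b = 1 \<and> A *v b = (b \<bullet> (A *v b)) *\<^sub>R b"
    using symmetric_matrix_orthonormal_eigenbasis_subspace[OF sym, of UNIV] by auto
  then obtain R where R: "pos_semidef_mat R" "R ** R = A"
    and R_eig: "\<And>w mu. A *v w = mu *\<^sub>R w \<Longrightarrow> R *v w = sqrt mu *\<^sub>R w"
    using orthonormal_eigenbasis_sqrt[OF B, of A "\<lambda>b. b \<bullet> (A *v b)"] nonneg by blast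
  have "R ** T = T ** R" if TA: "T ** A = A ** T" for T
  proof -
    have "(R ** T) *v b = (T ** R) *v b" if "b \<in> B" for b
    proof -
      define mu where "mu = b \<bullet> (A *v b)"
      have Ab: "A *v b = mu *\<^sub>R b" using eig that unfolding mu_def by blast
      have "A *v (T *v b) = (T ** A) *v b" by (simp add: TA matrix_vector_mul_assoc)
      also have "\<dots> = mu *\<^sub>R (T *v b)" by (simp add: Ab matrix_vector_mult_scaleR flip: matrix_vector_mul_assoc)
      finally have "R *v (T *v b) = sqrt mu *\<^sub>R (T *v b)" by (rule R_eig)
      moreover have "R *v b = sqrt mu *\<^sub>R b" by (rule R_eig[OF Ab])
      ultimately show ?thesis by (simp add: matrix_vector_mult_scaleR flip: matrix_vector_mul_assoc)
    qed
    then have "(R ** T) *v v = (T ** R) *v v" for v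
      using linear_eq_on_span[of "(*v) (R ** T)" "(*v) (T ** R)" B v] B(3)
      by (simp add: matrix_vector_mul_linear)
    then show ?thesis by (simp add: matrix_eq)
  qed
  then show ?thesis using R by blast
qed

lemma pos_semidef_commuting_sqrt_unique:
  fixes R T :: "real^'n^'n"
  assumes psd: "pos_semidef_mat R" "pos_semidef_mat T"
    and comm: "R ** T = T ** R" and sq: "R ** R = T ** T"
  shows "R = T"
proof -
  have "R *v x = T *v x" for x
  proof -
    \<comment> \<open>\<open>(R + T) (R - T) = 0\<close> for commuting \<open>R\<close>, \<open>T\<close>; positivity of \<open>R\<close> and \<open>T\<close> then kills \<open>y\<close>\<close>
    define y where "y = R *v x - T *v x"
    have "R *v y + T *v y = (R ** R) *v x - (R ** T) *v x + (T ** R) *v x - (T ** T) *v x"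
      unfolding y_def by (simp add: matrix_vector_mult_diff_distrib matrix_vector_mul_assoc)
    also have "\<dots> = 0" by (simp add: comm sq)
    finally have "y \<bullet> (R *v y) + y \<bullet> (T *v y) = 0" by (metis inner_add_right inner_zero_right)
    moreover have "0 \<le> y \<bullet> (R *v y)" "0 \<le> y \<bullet> (T *v y)"
      using psd unfolding pos_semidef_mat_def by blast+
    ultimately have "y \<bullet> (R *v y) = 0" "y \<bullet> (T *v y) = 0" by linarith+
    then have "R *v y = 0" "T *v y = 0" using pos_semidef_quadratic_zero psd by blast+
    moreover have "y \<bullet> y = y \<bullet> (R *v x) - y \<bullet> (T *v x)" by (simp add: y_def inner_diff_right)
    moreover have "transpose R = R" "transpose T = T" using psd unfolding pos_semidef_mat_def by blast+
    ultimately have "y \<bullet> y = 0" by (simp add: inner_symmetric_matrix)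
    then show ?thesis unfolding y_def by simp
  qed
  then show ?thesis by (simp add: matrix_eq)
qed

lemma mat_sqrt_pos_semidef:
  fixes A :: "real^'n^'n"
  assumes "pos_semidef_mat A"
  shows "pos_semidef_mat (mat_sqrt A) \<and> mat_sqrt A ** mat_sqrt A = A"
proof -
  obtain R where R: "pos_semidef_mat R" "R ** R = A"
    and comm: "\<And>T. T ** A = A ** T \<Longrightarrow> R ** T = T ** R"
    using pos_semidef_sqrt_exists[OF assms] by blast
  have "mat_sqrt A = R" unfolding mat_sqrt_def
  proof (rule the_equality)
    fix T assume T: "pos_semidef_mat T \<and> T ** T = A"
    then have "T ** A = A ** T" by (auto simp: matrix_mul_assoc)
    then have "T ** R = R ** T" using comm by simp
    then show "T = R" using pos_semidef_commuting_sqrt_unique[of T R] T R by simp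
  qed (use R in blast)
  then show ?thesis using R by simp
qed

lemma pos_def_imp_pos_semidef_mat: "pos_def_mat A \<Longrightarrow> pos_semidef_mat A"
  unfolding pos_def_mat_def pos_semidef_mat_def by (metis inner_zero_left less_eq_real_def)

lemma invertible_mat_sqrt:
  fixes A :: "real^'n^'n"
  assumes "pos_def_mat A"
  shows "invertible (mat_sqrt A)"
proof -
  have RR: "mat_sqrt A ** mat_sqrt A = A"
    using mat_sqrt_pos_semidef pos_def_imp_pos_semidef_mat assms by blast
  have "x = 0" if "mat_sqrt A *v x = 0" for x
  proof -
    have "A *v x = mat_sqrt A *v (mat_sqrt A *v x)" by (simp add: RR matrix_vector_mul_assoc)
    then have "A *v x = 0" by (simp add: that)
    then show ?thesis using assms unfolding pos_def_mat_def by fastforce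
  qed
  then have "inj ((*v) (mat_sqrt A))"
    by (simp add: linear_injective_0[OF matrix_vector_mul_linear])
  then show ?thesis using matrix_left_invertible_injective invertible_left_inverse by blast
qed

lemma matrix_inv_left:
  assumes "invertible (A :: 'a::semiring_1^'n^'n)"
  shows "matrix_inv A ** A = mat 1"
  using assms unfolding invertible_def matrix_inv_def by (rule someI2_ex) blast

section \<open>Jacobians through compositions\<close>

lemma eventually_nhds_isCont_compose:
  assumes "isCont h x" "\<forall>\<^sub>F z in nhds (h x). P z"
  shows "\<forall>\<^sub>F y in nhds x. P (h y)"
  using assms tendsto_at_iff_tendsto_nhds isCont_def filterlim_iff by blast

lemma norm_axis: "norm (axis a (x::'v::real_normed_vector) :: 'v^'a) = norm x"
proof -
  have "(\<Sum>i\<in>UNIV. (norm ((axis a x :: 'v^'a) $ i))\<^sup>2) = (\<Sum>i\<in>UNIV. if i = a then (norm x)\<^sup>2 else 0)"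
    by (rule sum.cong) (auto simp: axis_def)
  then show ?thesis unfolding norm_vec_def L2_set_def by simp
qed

lemma bounded_linear_axis: "bounded_linear (axis a :: 'v::real_normed_vector \<Rightarrow> 'v^'a)"
proof (rule bounded_linear_intro[where K=1])
  show "axis a (x + y) = (axis a x + axis a y :: 'v^'a)" for x y by (simp add: vec_eq_iff axis_def)
  show "axis a (r *\<^sub>R x) = (r *\<^sub>R axis a x :: 'v^'a)" for r x by (simp add: vec_eq_iff axis_def)
qed (simp add: norm_axis)

lemma has_derivative_vec_lambda:
  assumes "\<And>a. (F a has_derivative F' a) (at x)"
  shows "((\<lambda>y. (\<chi> a. F a y) :: 'v::real_normed_vector^'a) has_derivative (\<lambda>h. \<chi> a. F' a h)) (at x)"
proof -
  have sum_axis: "(\<chi> a. f a) = (\<Sum>a\<in>UNIV. axis a (f a) :: 'v^'a)" for f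
    by (simp add: vec_eq_iff sum_component axis_def)
  have "((\<lambda>y. \<Sum>a\<in>UNIV. (axis a (F a y) :: 'v^'a)) has_derivative (\<lambda>h. \<Sum>a\<in>UNIV. axis a (F' a h))) (at x)"
    by (intro has_derivative_sum bounded_linear.has_derivative[OF bounded_linear_axis] assms)
  then show ?thesis by (simp flip: sum_axis)
qed

lemma differentiable_vec_lambda:
  assumes "\<And>a. F a differentiable (at x)"
  shows "(\<lambda>y. (\<chi> a. F a y) :: 'v::real_normed_vector^'a) differentiable (at x)"
  using assms has_derivative_vec_lambda unfolding differentiable_def by metis

lemma bounded_bilinear_matrix_matrix_mult: "bounded_bilinear (\<lambda>(A::real^'b^'a) (B::real^'c^'b). A ** B)"
proof -
  have "bilinear (\<lambda>(A::real^'b^'a) (B::real^'c^'b). A ** B)"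
    unfolding bilinear_def
  proof (intro conjI allI)
    fix A :: "real^'b^'a" and B :: "real^'c^'b"
    show "linear (\<lambda>B::real^'c^'b. A ** B)"
      by (rule linearI) (simp_all add: vec_eq_iff matrix_matrix_mult_def sum_distrib_left sum.distrib
          distrib_left mult.left_commute)
    show "linear (\<lambda>A::real^'b^'a. A ** B)"
      by (rule linearI) (simp_all add: vec_eq_iff matrix_matrix_mult_def sum_distrib_left sum.distrib
          distrib_right mult.assoc)
  qed
  then show ?thesis by (simp add: bilinear_conv_bounded_bilinear)
qed

lemma differentiable_matrix_matrix_mult:
  fixes f :: "real^'a \<Rightarrow> real^'c^'b" and g :: "real^'a \<Rightarrow> real^'d^'c"
  assumes "f differentiable (at x)" "g differentiable (at x)"
  shows "(\<lambda>y. f y ** g y) differentiable (at x)"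
  using assms bounded_bilinear.FDERIV[OF bounded_bilinear_matrix_matrix_mult] unfolding differentiable_def
  by blast

text \<open>Unlike \<^const>\<open>twice_differentiable_at\<close>, these carry the Jacobian (resp. gradient) along,
  so that it can be computed through compositions.\<close>

definition diff_jacobian_at :: "(real^'a \<Rightarrow> real^'b) \<Rightarrow> (real^'a \<Rightarrow> real^'a^'b) \<Rightarrow> real^'a \<Rightarrow> bool" where
  "diff_jacobian_at h J x \<longleftrightarrow>
     (\<forall>\<^sub>F y in nhds x. (h has_derivative (\<lambda>v. J y *v v)) (at y)) \<and> J differentiable (at x)"

definition diff_gradient_at :: "(real^'a \<Rightarrow> real) \<Rightarrow> (real^'a \<Rightarrow> real^'a) \<Rightarrow> real^'a \<Rightarrow> bool" where
  "diff_gradient_at h G x \<longleftrightarrow>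
     (\<forall>\<^sub>F y in nhds x. (h has_derivative (\<lambda>v. G y \<bullet> v)) (at y)) \<and> G differentiable (at x)"

lemma diff_jacobian_at_imp_twice_differentiable_at:
  assumes "diff_jacobian_at h J x"
  shows "twice_differentiable_at h x \<and> matrix (frechet_derivative h (at x)) = J x"
proof -
  have ev: "\<forall>\<^sub>F y in nhds x. (h has_derivative (\<lambda>v. J y *v v)) (at y)" and dJ: "J differentiable (at x)"
    using assms unfolding diff_jacobian_at_def by auto
  have "twice_differentiable_at h x" unfolding twice_differentiable_at_def
    by (rule exI[of _ "\<lambda>y v. J y *v v"]) (use ev dJ in \<open>simp add: matrix_of_matrix_vector_mul\<close>)
  moreover have "frechet_derivative h (at x) = (\<lambda>v. J x *v v)"
    using frechet_derivative_at[OF eventually_nhds_x_imp_x[OF ev]] by simp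
  ultimately show ?thesis by (simp add: matrix_of_matrix_vector_mul)
qed

lemma diff_jacobian_at_ident: "diff_jacobian_at (\<lambda>y. y) (\<lambda>_. mat 1) x"
proof -
  have "((*v) (mat 1)) = (\<lambda>v::real^'a. v)" by (rule ext) simp
  then show ?thesis unfolding diff_jacobian_at_def by (simp add: has_derivative_ident differentiable_const)
qed

lemma diff_jacobian_at_compose:
  assumes h1: "diff_jacobian_at h1 J1 x" and h2: "diff_jacobian_at h2 J2 (h1 x)"
  shows "diff_jacobian_at (\<lambda>y. h2 (h1 y)) (\<lambda>y. J2 (h1 y) ** J1 y) x"
proof -
  have e1: "\<forall>\<^sub>F y in nhds x. (h1 has_derivative (\<lambda>v. J1 y *v v)) (at y)"
    using h1 unfolding diff_jacobian_at_def by blast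
  then have d1: "(h1 has_derivative (\<lambda>v. J1 x *v v)) (at x)" by (rule eventually_nhds_x_imp_x)
  have "\<forall>\<^sub>F y in nhds x. (h2 has_derivative (\<lambda>v. J2 (h1 y) *v v)) (at (h1 y))"
    using eventually_nhds_isCont_compose[OF has_derivative_continuous[OF d1]] h2
    unfolding diff_jacobian_at_def by blast
  with e1 have "\<forall>\<^sub>F y in nhds x. ((\<lambda>y. h2 (h1 y)) has_derivative (\<lambda>v. (J2 (h1 y) ** J1 y) *v v)) (at y)"
  proof eventually_elim
    case (elim y)
    from has_derivative_compose[OF elim] show ?case by (simp add: matrix_vector_mul_assoc)
  qed
  moreover have "(\<lambda>y. J2 (h1 y)) differentiable (at x)"
    using differentiable_chain_at[of h1 x J2] d1 h2 unfolding diff_jacobian_at_def o_def differentiable_def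
    by blast
  then have "(\<lambda>y. J2 (h1 y) ** J1 y) differentiable (at x)"
    by (rule differentiable_matrix_matrix_mult) (use h1 in \<open>simp add: diff_jacobian_at_def\<close>)
  ultimately show ?thesis unfolding diff_jacobian_at_def by blast
qed

lemma fold_matrix_mult_right:
  "fold (\<lambda>s A. B s ** A) xs A = fold (\<lambda>s A. B s ** A) xs (mat 1) ** (A :: 'a::semiring_1^'n^'n)"
proof (induction xs arbitrary: A)
  case (Cons a xs)
  have "fold (\<lambda>s A. B s ** A) (a # xs) A = fold (\<lambda>s A. B s ** A) xs (mat 1) ** (B a ** A)"
    using Cons.IH[of "B a ** A"] by simp
  also have "\<dots> = fold (\<lambda>s A. B s ** A) (a # xs) (mat 1) ** A"
    using Cons.IH[of "B a"] by (simp add: matrix_mul_assoc)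
  finally show ?case .
qed simp

lemma diff_jacobian_at_fold_similar:
  fixes R :: "real^'a^'a"
  assumes "\<forall>s\<in>set xs. P s x = x \<and> (\<exists>J. diff_jacobian_at (P s) J x \<and> R ** J x = B s ** R)"
  shows "fold P xs x = x \<and>
    (\<exists>J. diff_jacobian_at (fold P xs) J x \<and> R ** J x = fold (\<lambda>s A. B s ** A) xs (mat 1) ** R)"
  using assms
proof (induction xs)
  case Nil
  show ?case using diff_jacobian_at_ident[of x] by (auto simp: id_def)
next
  case (Cons a xs)
  then obtain Ja where Ja: "diff_jacobian_at (P a) Ja x" "R ** Ja x = B a ** R" and Pa: "P a x = x"
    by auto
  from Cons obtain J where J: "diff_jacobian_at (fold P xs) J x"
    and RJ: "R ** J x = fold (\<lambda>s A. B s ** A) xs (mat 1) ** R" and fix_xs: "fold P xs x = x"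
    by auto
  have "diff_jacobian_at (\<lambda>y. fold P xs (P a y)) (\<lambda>y. J (P a y) ** Ja y) x"
    using diff_jacobian_at_compose[OF Ja(1)] J Pa by simp
  moreover have "R ** (J (P a x) ** Ja x) = fold (\<lambda>s A. B s ** A) xs (mat 1) ** (B a ** R)"
    by (simp add: Pa RJ matrix_mul_assoc flip: Ja(2))
  then have "R ** (J (P a x) ** Ja x) = fold (\<lambda>s A. B s ** A) (a # xs) (mat 1) ** R"
    using fold_matrix_mult_right[of B xs "B a"] by (simp add: matrix_mul_assoc)
  ultimately show ?case using fix_xs Pa by (auto simp: o_def)
qed

lemma diff_gradient_at_nth: "diff_gradient_at (\<lambda>u. u $ s) (\<lambda>_. axis s 1) x"
proof -
  have "(\<lambda>v::real^'a. axis s 1 \<bullet> v) = (\<lambda>v. v $ s)" by (simp add: inner_commute inner_axis)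
  then have "((\<lambda>u::real^'a. u $ s) has_derivative (\<lambda>v. axis s 1 \<bullet> v)) (at y)" for y
    using bounded_linear_imp_has_derivative[OF bounded_linear_vec_nth] by simp
  then show ?thesis unfolding diff_gradient_at_def by (simp add: differentiable_const)
qed

lemma diff_gradient_at_diff_scaled:
  assumes f: "diff_gradient_at f Gf x" and g: "diff_gradient_at g Gg x"
  shows "diff_gradient_at (\<lambda>u. f u - c * g u) (\<lambda>y. Gf y - c *\<^sub>R Gg y) x"
proof -
  have "\<forall>\<^sub>F y in nhds x. (f has_derivative (\<lambda>v. Gf y \<bullet> v)) (at y)"
    and "\<forall>\<^sub>F y in nhds x. (g has_derivative (\<lambda>v. Gg y \<bullet> v)) (at y)"
    using f g unfolding diff_gradient_at_def by blast+
  then have "\<forall>\<^sub>F y in nhds x. ((\<lambda>u. f u - c * g u) has_derivative (\<lambda>v. (Gf y - c *\<^sub>R Gg y) \<bullet> v)) (at y)"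
  proof eventually_elim
    case (elim y)
    then show ?case
      using has_derivative_diff[OF elim(1) has_derivative_mult_right[OF elim(2), of c]]
      by (simp add: inner_diff_left)
  qed
  moreover have "(\<lambda>y. Gf y - c *\<^sub>R Gg y) differentiable (at x)"
    using f g unfolding diff_gradient_at_def by (intro differentiable_diff differentiable_scaleR differentiable_const) auto
  ultimately show ?thesis unfolding diff_gradient_at_def by blast
qed

lemma diff_gradient_at_compose_affine:
  fixes A :: "real^'a^'b"
  assumes "diff_gradient_at f H (A *v x + c)"
  shows "diff_gradient_at (\<lambda>u. f (A *v u + c)) (\<lambda>y. transpose A *v H (A *v y + c)) x"
proof -
  have daff: "((\<lambda>u. A *v u + c) has_derivative (\<lambda>v. A *v v)) (at y)" for y
    by (intro has_derivative_add_const bounded_linear_imp_has_derivative matrix_vector_mul_bounded_linear)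
  have "\<forall>\<^sub>F z in nhds (A *v x + c). (f has_derivative (\<lambda>v. H z \<bullet> v)) (at z)"
    using assms unfolding diff_gradient_at_def by blast
  then have "\<forall>\<^sub>F y in nhds x. (f has_derivative (\<lambda>v. H (A *v y + c) \<bullet> v)) (at (A *v y + c))"
    using eventually_nhds_isCont_compose has_derivative_continuous[OF daff] by blast
  then have "\<forall>\<^sub>F y in nhds x. ((\<lambda>u. f (A *v u + c)) has_derivative
      (\<lambda>v. (transpose A *v H (A *v y + c)) \<bullet> v)) (at y)"
    by eventually_elim (drule has_derivative_compose[OF daff], simp add: dot_lmul_matrix vector_transpose_matrix)
  moreover have "(\<lambda>y. transpose A *v H (A *v y + c)) differentiable (at x)"
  proof -
    have "H differentiable (at (A *v x + c))" using assms unfolding diff_gradient_at_def by blast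
    then have "(\<lambda>y. H (A *v y + c)) differentiable (at x)"
      using differentiable_chain_at[of "\<lambda>u. A *v u + c" x H] daff unfolding differentiable_def o_def by blast
    then show ?thesis
      using differentiable_chain_at[OF _ bounded_linear_imp_differentiable[OF matrix_vector_mul_bounded_linear[of "transpose A"]]]
      by (simp add: o_def)
  qed
  ultimately show ?thesis unfolding diff_gradient_at_def by blast
qed

lemma diff_gradient_at_compose_real:
  assumes l: "diff_gradient_at l G x"
    and p: "\<forall>\<^sub>F z in nhds (l x). DERIV p z :> p' z" and p': "p' differentiable (at (l x))"
  shows "diff_gradient_at (\<lambda>y. p (l y)) (\<lambda>y. p' (l y) *\<^sub>R G y) x"
proof -
  have e1: "\<forall>\<^sub>F y in nhds x. (l has_derivative (\<lambda>v. G y \<bullet> v)) (at y)"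
    using l unfolding diff_gradient_at_def by blast
  then have d1: "(l has_derivative (\<lambda>v. G x \<bullet> v)) (at x)" by (rule eventually_nhds_x_imp_x)
  have "\<forall>\<^sub>F y in nhds x. DERIV p (l y) :> p' (l y)"
    using eventually_nhds_isCont_compose[OF has_derivative_continuous[OF d1] p] .
  with e1 have "\<forall>\<^sub>F y in nhds x. ((\<lambda>y. p (l y)) has_derivative (\<lambda>v. (p' (l y) *\<^sub>R G y) \<bullet> v)) (at y)"
  proof eventually_elim
    case (elim y)
    from has_derivative_compose[OF elim(1) elim(2)[unfolded has_field_derivative_def]]
    show ?case by simp
  qed
  moreover have "(\<lambda>y. p' (l y) *\<^sub>R G y) differentiable (at x)"
  proof (rule differentiable_scaleR)
    show "(\<lambda>y. p' (l y)) differentiable (at x)"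
      using differentiable_chain_at[of l x p'] d1 p' unfolding differentiable_def o_def by blast
  qed (use l in \<open>simp add: diff_gradient_at_def\<close>)
  ultimately show ?thesis unfolding diff_gradient_at_def by blast
qed

definition row_update_matrix :: "'a \<Rightarrow> real^'a \<Rightarrow> real^'a^'a" where
  "row_update_matrix s w = (\<chi> a b. if a = s then w $ b else (if a = b then 1 else 0))"

lemma row_update_matrix_mult: "row_update_matrix s w *v v = v + (w \<bullet> v - v $ s) *\<^sub>R axis s 1"
proof -
  have "(\<Sum>b\<in>UNIV. (if a = b then 1 else 0) * v $ b) = (\<Sum>b\<in>UNIV. if a = b then v $ b else 0)" for a
    by (rule sum.cong) auto
  then show ?thesis
    by (auto simp: vec_eq_iff row_update_matrix_def matrix_vector_mult_def inner_vec_def axis_def)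
qed

lemma diff_jacobian_at_vupd:
  assumes "diff_gradient_at \<phi> G x"
  shows "diff_jacobian_at (\<lambda>u. vupd u s (\<phi> u)) (\<lambda>y. row_update_matrix s (G y)) x"
proof -
  have eq: "(\<lambda>u. vupd u s (\<phi> u)) = (\<lambda>u. u + (\<phi> u - u $ s) *\<^sub>R axis s 1)"
    by (rule ext) (simp add: vupd_def vec_eq_iff axis_def)
  have "\<forall>\<^sub>F y in nhds x. (\<phi> has_derivative (\<lambda>v. G y \<bullet> v)) (at y)"
    using assms unfolding diff_gradient_at_def by blast
  then have "\<forall>\<^sub>F y in nhds x. ((\<lambda>u. vupd u s (\<phi> u)) has_derivative (\<lambda>v. row_update_matrix s (G y) *v v)) (at y)"
    unfolding eq row_update_matrix_mult
    by eventually_elim (intro has_derivative_add has_derivative_ident has_derivative_scaleR_left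
        has_derivative_diff bounded_linear_imp_has_derivative bounded_linear_vec_nth)
  moreover have "(\<lambda>y. row_update_matrix s (G y)) differentiable (at x)"
  proof -
    have "G differentiable (at x)" using assms unfolding diff_gradient_at_def by blast
    then have "(\<lambda>y. G y $ b) differentiable (at x)" for b
      using differentiable_chain_at[OF _ bounded_linear_imp_differentiable[OF bounded_linear_vec_nth]]
      by (simp add: o_def)
    then have "(\<lambda>y. if a = s then G y $ b else (if a = b then 1 else 0)) differentiable (at x)" for a b
      by (cases "a = s") (simp_all add: differentiable_const)
    then show ?thesis unfolding row_update_matrix_def by (intro differentiable_vec_lambda)
  qed
  ultimately show ?thesis unfolding diff_jacobian_at_def by blast
qed

lemma diff_jacobian_at_coordinate_step:
  assumes "diff_gradient_at \<phi> G x"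
    and "\<forall>\<^sub>F z in nhds (x $ s - c * \<phi> x). DERIV p z :> p' z"
    and "p' differentiable (at (x $ s - c * \<phi> x))"
  shows "diff_jacobian_at (\<lambda>u. vupd u s (p (u $ s - c * \<phi> u)))
      (\<lambda>y. row_update_matrix s (p' (y $ s - c * \<phi> y) *\<^sub>R (axis s 1 - c *\<^sub>R G y))) x"
  using assms diff_jacobian_at_vupd diff_gradient_at_compose_real
    diff_gradient_at_diff_scaled[OF diff_gradient_at_nth] by blast

lemma row_update_matrix_similar:
  fixes R :: "real^'s^'s"
  assumes sym: "transpose R = R"
  shows "R ** row_update_matrix s (axis s 1 - c *\<^sub>R (R ** R) $ s)
       = (mat 1 - (\<chi> a b. R $ a $ s * c * R $ b $ s)) ** R"
proof -
  have Rs: "R $ k $ s = R $ s $ k" for k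
    using sym by (metis transpose_def vec_lambda_beta)
  have RR: "(R ** R) $ s $ b = (\<Sum>k\<in>UNIV. R $ s $ k * R $ k $ b)" for b
    by (simp add: matrix_matrix_mult_def)
  have "(R ** row_update_matrix s (axis s 1 - c *\<^sub>R (R ** R) $ s)) $ a $ b
      = R $ a $ b - R $ a $ s * c * (R ** R) $ s $ b" for a b
  proof -
    have "(\<Sum>k\<in>UNIV. R $ a $ k * row_update_matrix s (axis s 1 - c *\<^sub>R (R ** R) $ s) $ k $ b)
        = (\<Sum>k\<in>UNIV. (if k = b then R $ a $ k else 0) - (if k = s then R $ a $ k * c * (R ** R) $ s $ b else 0))"
      by (rule sum.cong) (auto simp: row_update_matrix_def axis_def algebra_simps)
    then show ?thesis by (simp add: matrix_matrix_mult_def sum_subtractf)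
  qed
  moreover have "((mat 1 - (\<chi> a b. R $ a $ s * c * R $ b $ s)) ** R) $ a $ b
      = R $ a $ b - R $ a $ s * c * (R ** R) $ s $ b" for a b
  proof -
    have "(\<Sum>k\<in>UNIV. ((if a = k then 1 else 0) - R $ a $ s * c * R $ k $ s) * R $ k $ b)
        = (\<Sum>k\<in>UNIV. (if a = k then R $ k $ b else 0) - (R $ a $ s * c) * (R $ s $ k * R $ k $ b))"
      by (rule sum.cong) (auto simp: algebra_simps Rs)
    then show ?thesis
      by (simp add: matrix_matrix_mult_def mat_def sum_subtractf sum_distrib_left[symmetric] RR)
  qed
  ultimately show ?thesis by (simp add: vec_eq_iff)
qed

lemma inverse_scaleR_axis_minus_scaleR:
  fixes h :: "real^'s"
  assumes "1 + c * a \<noteq> 0"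
  shows "inverse (1 + c * a) *\<^sub>R (axis s 1 - c *\<^sub>R h)
       = axis s 1 - (c / (1 + c * a)) *\<^sub>R (\<chi> t. h $ t + (if s = t then a else 0))"
proof -
  have "(inverse (1 + c * a) *\<^sub>R (axis s 1 - c *\<^sub>R h)) $ b
      = (axis s 1 - (c / (1 + c * a)) *\<^sub>R (\<chi> t. h $ t + (if s = t then a else 0))) $ b" for b
    using assms by (cases "b = s") (simp_all add: axis_def inverse_eq_divide field_simps)
  then show ?thesis by (simp add: vec_eq_iff)
qed

section \<open>Smoothness and Frechet subgradients\<close>

lemma linear_eq_inner_axis:
  fixes l :: "real^'n \<Rightarrow> real"
  assumes "linear l"
  shows "l h = (\<chi> i. l (axis i 1)) \<bullet> h"
proof -
  have "l h = l (\<Sum>i\<in>UNIV. h $ i *\<^sub>R axis i 1)"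
    using basis_expansion[of h] by (simp add: scalar_mult_eq_scaleR)
  also have "\<dots> = (\<chi> i. l (axis i 1)) \<bullet> h"
    by (simp add: linear_sum[OF assms] linear_scale[OF assms] inner_vec_def mult.commute)
  finally show ?thesis .
qed

lemma C3_on_gradient_components:
  fixes f :: "real^'n \<Rightarrow> real" and df :: "real^'n \<Rightarrow> real^'n"
  assumes grad: "\<forall>x\<in>U. (f has_derivative (\<lambda>h. df x \<bullet> h)) (at x)"
    and U: "open U" "x0 \<in> U" and "C3_on U f"
  shows "\<exists>H. \<forall>j. diff_gradient_at (\<lambda>z. df z $ j) (H j) x0 \<and>
                  H j x0 = matrix (frechet_derivative df (at x0)) $ j"
proof -
  obtain D1 D2 D3 where d1: "\<forall>x\<in>U. (f has_derivative blinfun_apply (D1 x)) (at x)"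
    and d2: "\<forall>x\<in>U. (D1 has_derivative blinfun_apply (D2 x)) (at x)"
    and d3: "\<forall>x\<in>U. (D2 has_derivative blinfun_apply (D3 x)) (at x)"
    using \<open>C3_on U f\<close> unfolding C3_on_def by blast
  define H where "H j z = (\<chi> i. blinfun_apply (blinfun_apply (D2 z) (axis i 1)) (axis j 1))" for j z
  have df_eq: "df z $ j = blinfun_apply (D1 z) (axis j 1)" if "z \<in> U" for z j
    using has_derivative_unique[OF d1[rule_format, OF that] grad[rule_format, OF that]]
    by (simp add: inner_axis)
  have der: "((\<lambda>z. df z $ j) has_derivative (\<lambda>h. H j z \<bullet> h)) (at z)" if "z \<in> U" for z j
  proof -
    have "((\<lambda>x. blinfun_apply (D1 x) (axis j 1)) has_derivative
          (\<lambda>h. blinfun_apply (D1 z) 0 + blinfun_apply (blinfun_apply (D2 z) h) (axis j 1))) (at z)"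
      by (rule blinfun.FDERIV[OF d2[rule_format, OF that] has_derivative_const])
    moreover have "linear (\<lambda>h. blinfun_apply (blinfun_apply (D2 z) h) (axis j 1))"
      by (intro bounded_linear.linear bounded_linear_compose[OF blinfun.bounded_linear_left]
          blinfun.bounded_linear_right)
    then have "(\<lambda>h. blinfun_apply (blinfun_apply (D2 z) h) (axis j 1)) = (\<lambda>h. H j z \<bullet> h)"
      unfolding H_def by (intro ext linear_eq_inner_axis)
    ultimately have "((\<lambda>x. blinfun_apply (D1 x) (axis j 1)) has_derivative (\<lambda>h. H j z \<bullet> h)) (at z)"
      by simp
    then show ?thesis
      by (rule has_derivative_transform_within_open[OF _ U(1) that]) (simp add: df_eq)
  qed
  have "H j differentiable (at x0)" for j
  proof -
    have "((\<lambda>z. blinfun_apply (D2 z) (axis i 1)) has_derivative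
           (\<lambda>h. blinfun_apply (D2 x0) 0 + blinfun_apply (blinfun_apply (D3 x0) h) (axis i 1))) (at x0)" for i
      by (rule blinfun.FDERIV[OF d3[rule_format, OF U(2)] has_derivative_const])
    then have "(\<lambda>z. blinfun_apply (blinfun_apply (D2 z) (axis i 1)) (axis j 1)) differentiable (at x0)" for i
      using blinfun.FDERIV[OF _ has_derivative_const] unfolding differentiable_def by blast
    then show ?thesis unfolding H_def by (rule differentiable_vec_lambda)
  qed
  then have "diff_gradient_at (\<lambda>z. df z $ j) (H j) x0" for j
    unfolding diff_gradient_at_def using eventually_nhds_in_open[OF U] der by (auto elim!: eventually_mono)
  moreover have "(df has_derivative (\<lambda>h. \<chi> j. H j x0 \<bullet> h)) (at x0)"
    using has_derivative_vec_lambda[of "\<lambda>j z. df z $ j", OF der[OF U(2)]] by simp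
  then have "matrix (frechet_derivative df (at x0)) $ j = H j x0" for j
    by (simp add: frechet_derivative_at[symmetric] matrix_def inner_axis vec_eq_iff)
  ultimately show ?thesis by metis
qed

lemma C3_on_real_derivatives:
  fixes G :: "real \<Rightarrow> real"
  assumes U: "open U" "x0 \<in> U" and "C3_on U G"
  shows "\<exists>G1 G2. (\<forall>x\<in>U. DERIV G x :> G1 x) \<and> (\<forall>x\<in>U. DERIV G1 x :> G2 x) \<and>
     G2 differentiable (at x0) \<and> deriv (deriv G) x0 = G2 x0"
proof -
  obtain D1 D2 D3 where d1: "\<forall>x\<in>U. (G has_derivative blinfun_apply (D1 x)) (at x)"
    and d2: "\<forall>x\<in>U. (D1 has_derivative blinfun_apply (D2 x)) (at x)"
    and d3: "\<forall>x\<in>U. (D2 has_derivative blinfun_apply (D3 x)) (at x)"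
    using \<open>C3_on U G\<close> unfolding C3_on_def by blast
  define G1 where "G1 x = blinfun_apply (D1 x) 1" for x
  define G2 where "G2 x = blinfun_apply (blinfun_apply (D2 x) 1) 1" for x
  have l1: "blinfun_apply (D1 x) = (\<lambda>h. G1 x * h)" for x
  proof
    fix h :: real
    have "blinfun_apply (D1 x) h = blinfun_apply (D1 x) (h *\<^sub>R 1)" by simp
    also have "\<dots> = G1 x * h" unfolding blinfun.scaleR_right G1_def by simp
    finally show "blinfun_apply (D1 x) h = G1 x * h" .
  qed
  have G1: "DERIV G x :> G1 x" if "x \<in> U" for x
    using d1 that unfolding has_field_derivative_def l1 by blast
  have "(\<lambda>h. blinfun_apply (blinfun_apply (D2 x) h) 1) = (\<lambda>h. G2 x * h)" for x
  proof
    fix h :: real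
    have "blinfun_apply (blinfun_apply (D2 x) h) 1 = blinfun_apply (blinfun_apply (D2 x) (h *\<^sub>R 1)) 1" by simp
    also have "\<dots> = G2 x * h" unfolding blinfun.scaleR_right blinfun.scaleR_left G2_def by simp
    finally show "blinfun_apply (blinfun_apply (D2 x) h) 1 = G2 x * h" .
  qed
  then have G2: "DERIV G1 x :> G2 x" if "x \<in> U" for x
    using blinfun.FDERIV[OF d2[rule_format, OF that] has_derivative_const, of 1]
    unfolding has_field_derivative_def G1_def[abs_def] by simp
  have "G2 differentiable (at x0)"
    using blinfun.FDERIV[OF blinfun.FDERIV[OF d3[rule_format, OF U(2)] has_derivative_const]
        has_derivative_const, of 1 1]
    unfolding differentiable_def G2_def[abs_def] by blast
  moreover have "DERIV (deriv G) x0 :> G2 x0"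
    by (rule has_field_derivative_transform_within_open[OF G2[OF U(2)] U]) (simp add: DERIV_imp_deriv[OF G1])
  ultimately show ?thesis using G1 G2 DERIV_imp_deriv by blast
qed

lemma has_real_derivative_in_fsubdiff:
  fixes g :: "real \<Rightarrow> ereal"
  assumes U: "open U" "u0 \<in> U" "\<forall>x\<in>U. \<bar>g x\<bar> \<noteq> \<infinity>"
    and d: "DERIV (\<lambda>x. real_of_ereal (g x)) u0 :> d"
  shows "d \<in> fsubdiff g u0"
proof -
  define G where "G x = real_of_ereal (g x)" for x
  have g_eq: "g x = ereal (G x)" if "x \<in> U" for x using U(3) that unfolding G_def by (cases "g x") auto
  obtain r where r: "r > 0" "ball u0 r \<subseteq> U" using U(1,2) open_contains_ball by blast
  have "\<exists>\<delta>>0. \<forall>y. dist y u0 < \<delta> \<longrightarrow> g u0 + ereal (d \<bullet> (y - u0) - e * norm (y - u0)) \<le> g y"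
    if "e > 0" for e
  proof -
    obtain \<delta> where \<delta>: "\<delta> > 0" "\<forall>y. 0 < norm (y - u0) \<and> norm (y - u0) < \<delta> \<longrightarrow>
        norm (G y - G u0 - d * (y - u0)) / norm (y - u0) < e"
      using d \<open>e > 0\<close> unfolding has_field_derivative_def has_derivative_at' G_def by blast
    have "g u0 + ereal (d \<bullet> (y - u0) - e * norm (y - u0)) \<le> g y" if y: "dist y u0 < min \<delta> r" for y
    proof (cases "y = u0")
      case False
      then have "\<bar>G y - G u0 - d * (y - u0)\<bar> < e * \<bar>y - u0\<bar>"
        using \<delta>(2) y by (auto simp: dist_norm divide_less_eq)
      moreover have "y \<in> U" using y r by (auto simp: dist_commute)
      ultimately show ?thesis using g_eq U(2) by simp
    qed simp
    then show ?thesis using \<delta>(1) r(1) by (intro exI[of _ "min \<delta> r"]) auto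
  qed
  then show ?thesis unfolding fsubdiff_def using U by simp
qed

lemma fsubdiff_separable_sum_component:
  fixes g :: "'n::finite \<Rightarrow> real \<Rightarrow> ereal"
  assumes v: "v \<in> fsubdiff (\<lambda>\<beta>. \<Sum>j\<in>UNIV. g j (\<beta> $ j)) x"
  shows "v $ j \<in> fsubdiff (g j) (x $ j)"
proof -
  define h where "h \<beta> = (\<Sum>j\<in>UNIV. g j (\<beta> $ j))" for \<beta> :: "real^'n"
  define K where "K = (\<Sum>i\<in>UNIV - {j}. g i (x $ i))"
  have split: "h (vupd x j t) = g j t + K" for t
  proof -
    have "h (vupd x j t) = g j (vupd x j t $ j) + (\<Sum>i\<in>UNIV - {j}. g i (vupd x j t $ i))"
      unfolding h_def by (simp add: sum.remove[of UNIV j])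
    also have "(\<Sum>i\<in>UNIV - {j}. g i (vupd x j t $ i)) = K" unfolding K_def
      by (rule sum.cong) (auto simp: vupd_def)
    finally show ?thesis by (simp add: vupd_def)
  qed
  have "vupd x j (x $ j) = x" by (simp add: vupd_def vec_eq_iff)
  then have hx: "h x = g j (x $ j) + K" using split[of "x $ j"] by simp
  have fin: "\<bar>h x\<bar> \<noteq> \<infinity>"
    and sub: "\<forall>e>0. \<exists>d>0. \<forall>y. dist y x < d \<longrightarrow> h x + ereal (v \<bullet> (y - x) - e * norm (y - x)) \<le> h y"
    using v unfolding fsubdiff_def h_def[symmetric] by (auto split: if_splits)
  have terms: "\<bar>g i (x $ i)\<bar> \<noteq> \<infinity>" for i
    using fin sum_Inf[of "\<lambda>i. g i (x $ i)" UNIV] unfolding h_def by auto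
  then have "\<bar>K\<bar> \<noteq> \<infinity>" unfolding K_def using sum_Inf[of "\<lambda>i. g i (x $ i)"] by auto
  then obtain a k where a: "g j (x $ j) = ereal a" and k: "K = ereal k"
    using terms[of j] by (metis ereal_real')
  have "\<exists>d>0. \<forall>t. dist t (x $ j) < d \<longrightarrow> g j (x $ j) + ereal (v $ j \<bullet> (t - x $ j) - e * norm (t - x $ j)) \<le> g j t"
    if "e > 0" for e
  proof -
    obtain d where d: "d > 0" "\<forall>y. dist y x < d \<longrightarrow> h x + ereal (v \<bullet> (y - x) - e * norm (y - x)) \<le> h y"
      using sub \<open>e > 0\<close> by blast
    have "g j (x $ j) + ereal (v $ j \<bullet> (t - x $ j) - e * norm (t - x $ j)) \<le> g j t"
      if t: "dist t (x $ j) < d" for t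
    proof -
      have diff: "vupd x j t - x = (t - x $ j) *\<^sub>R axis j 1"
        by (simp add: vupd_def vec_eq_iff axis_def)
      then have "dist (vupd x j t) x < d" using t by (simp add: dist_norm)
      from d(2)[rule_format, OF this]
      have "ereal a + ereal k + ereal (v $ j * (t - x $ j) - e * \<bar>t - x $ j\<bar>) \<le> g j t + ereal k"
        unfolding hx split a k diff by (simp add: inner_axis mult.commute)
      then show ?thesis unfolding a by (cases "g j t") auto
    qed
    then show ?thesis using d(1) by blast
  qed
  then show ?thesis unfolding fsubdiff_def using a by simp
qed

section \<open>Proximal maps of weakly convex functions\<close>

lemma has_field_derivative_lower_bound:
  fixes f :: "real \<Rightarrow> real"
  assumes "DERIV f x :> D" "\<forall>\<^sub>F y in at x. c \<le> (f y - f x) / (y - x)"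
  shows "c \<le> D"
  using assms(1) unfolding has_field_derivative_iff
  by (rule tendsto_lowerbound) (use assms(2) in auto)

lemma has_field_derivative_left_inverse:
  fixes p q :: "real \<Rightarrow> real"
  assumes "a \<le> b" and q: "\<forall>y\<in>{a..b}. DERIV q y :> q' y \<and> q' y \<noteq> 0 \<and> p (q y) = y"
    and z: "q a < z" "z < q b"
  shows "a < p z \<and> p z < b \<and> DERIV p z :> inverse (q' (p z))"
proof -
  have contq: "isCont q y" if "y \<in> {a..b}" for y using q that DERIV_isCont by blast
  have preimage: "\<exists>w. a < w \<and> w < b \<and> q w = y" if y: "q a < y" "y < q b" for y
  proof -
    obtain w where "a \<le> w" "w \<le> b" "q w = y"
      using IVT[of q a y b] y contq \<open>a \<le> b\<close> by (auto simp: less_imp_le)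
    moreover have "w \<noteq> a" "w \<noteq> b" using y \<open>q w = y\<close> by auto
    ultimately show ?thesis by (auto simp: less_le)
  qed
  then obtain w where w: "a < w" "w < b" "q w = z" using z by blast
  then have pz: "p z = w" using q by auto
  have "isCont p (q w)"
    by (rule isCont_inverse_function[of "min (w - a) (b - w)"]) (use w q contq in \<open>auto simp: abs_le_iff\<close>)
  moreover have "q (p y) = y" if "q a < y" "y < q b" for y
    using preimage[OF that] q by force
  ultimately have "DERIV p z :> inverse (q' (p z))"
    using q pz w z by (intro DERIV_inverse_function[where f = q and a = "q a" and b = "q b"]) auto
  then show ?thesis using pz w by simp
qed

text \<open>\<open>\<gamma> g\<close> is \<open>\<alpha>\<close>-weakly convex with \<open>\<alpha> < 1\<close>: the proximal objective
  \<open>(u - z)\<^sup>2/2 + \<gamma> g u\<close> is then \<open>(1 - \<alpha>)\<close>-strongly convex.\<close>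

locale weakly_convex =
  fixes g :: "real \<Rightarrow> ereal" and \<gamma> \<alpha> :: real
  assumes gamma_pos: "\<gamma> > 0" and alpha_less_one: "\<alpha> < 1"
    and not_minf: "\<forall>x. g x \<noteq> -\<infinity>"
    and convex: "ereal_convex (\<lambda>x. ereal \<gamma> * g x + ereal (\<alpha> / 2 * x\<^sup>2))"
begin

definition "edom = {x. g x \<noteq> \<infinity>}"
definition "G x = real_of_ereal (g x)"
definition "cvx x = \<gamma> * G x + \<alpha> / 2 * x\<^sup>2"

lemma g_eq_G: "x \<in> edom \<Longrightarrow> g x = ereal (G x)"
  using not_minf unfolding edom_def G_def by (cases "g x") auto

lemma convex_combination_step:
  assumes "x \<in> edom" "y \<in> edom" "0 \<le> t" "t \<le> 1"
  shows "(1 - t) * x + t * y \<in> edom \<and> cvx ((1 - t) * x + t * y) \<le> (1 - t) * cvx x + t * cvx y"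
proof -
  define m where "m = (1 - t) * x + t * y"
  have "ereal \<gamma> * g m + ereal (\<alpha> / 2 * m\<^sup>2)
      \<le> ereal (1 - t) * (ereal \<gamma> * g x + ereal (\<alpha> / 2 * x\<^sup>2)) + ereal t * (ereal \<gamma> * g y + ereal (\<alpha> / 2 * y\<^sup>2))"
    using convex assms(3,4) unfolding ereal_convex_def m_def by blast
  also have "\<dots> = ereal ((1 - t) * cvx x + t * cvx y)"
    using assms(1,2) by (simp add: g_eq_G cvx_def)
  finally have bound: "ereal \<gamma> * g m + ereal (\<alpha> / 2 * m\<^sup>2) \<le> ereal ((1 - t) * cvx x + t * cvx y)" .
  have "g m \<noteq> \<infinity>"
  proof
    assume "g m = \<infinity>"
    then have "ereal \<gamma> * g m = \<infinity>" using gamma_pos by simp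
    then have inf: "ereal \<gamma> * g m + ereal (\<alpha> / 2 * m\<^sup>2) = \<infinity>" by simp
    show False using bound unfolding inf by simp
  qed
  then have "m \<in> edom" unfolding edom_def by simp
  moreover from this have "ereal (cvx m) \<le> ereal ((1 - t) * cvx x + t * cvx y)"
    using bound by (simp add: g_eq_G cvx_def)
  ultimately show ?thesis unfolding m_def by simp
qed

lemma convex_edom: "convex edom"
proof (rule convexI)
  fix x y u v :: real assume "x \<in> edom" "y \<in> edom" "0 \<le> u" "0 \<le> v" "u + v = 1"
  then have "u = 1 - v" by simp
  then show "u *\<^sub>R x + v *\<^sub>R y \<in> edom"
    using convex_combination_step[of x y v] \<open>x \<in> edom\<close> \<open>y \<in> edom\<close> \<open>0 \<le> u\<close> \<open>0 \<le> v\<close> by simp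
qed

lemma convex_on_cvx: "convex_on edom cvx"
proof (rule convex_onI)
  fix t x y :: real assume "0 < t" "t < 1" "x \<in> edom" "y \<in> edom"
  then show "cvx ((1 - t) *\<^sub>R x + t *\<^sub>R y) \<le> (1 - t) * cvx x + t * cvx y"
    using convex_combination_step[of x y t] by simp
qed (rule convex_edom)

lemma cvx_above_tangent:
  assumes "open U" "U \<subseteq> edom" "c \<in> U" "DERIV G c :> d" "x \<in> edom"
  shows "cvx x - cvx c \<ge> (\<gamma> * d + \<alpha> * c) * (x - c)"
proof -
  have "DERIV cvx c :> \<gamma> * d + \<alpha> * c"
    unfolding cvx_def[abs_def] by (auto intro!: derivative_eq_intros assms(4))
  moreover have "c \<in> interior edom" using assms interior_maximal by blast
  ultimately show ?thesis
    using convex_on_imp_above_tangent[OF convex_on_cvx convex_connected[OF convex_edom]] assms(5)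
      has_field_derivative_at_within by blast
qed

lemma prox_gradient_step:
  assumes U: "open U" "U \<subseteq> edom" "u \<in> U" and d: "DERIV G u :> d"
  shows "prox (\<lambda>v. ereal \<gamma> * g v) (u + \<gamma> * d) = u"
proof -
  define z where "z = u + \<gamma> * d"
  define obj where "obj v = ereal ((v - z)\<^sup>2 / 2) + ereal \<gamma> * g v" for v
  have ou: "obj u = ereal ((u - z)\<^sup>2 / 2 + \<gamma> * G u)" unfolding obj_def using U g_eq_G by auto
  have strict: "obj u < obj v" if "v \<noteq> u" for v
  proof (cases "v \<in> edom")
    case False
    then show ?thesis using ou gamma_pos unfolding obj_def edom_def by simp
  next
    case True
    have "((v - z)\<^sup>2 / 2 + \<gamma> * G v) - ((u - z)\<^sup>2 / 2 + \<gamma> * G u)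
        = (cvx v - cvx u - (\<gamma> * d + \<alpha> * u) * (v - u)) + (1 - \<alpha>) / 2 * (v - u)\<^sup>2"
      unfolding cvx_def z_def by (simp add: power2_eq_square field_simps)
    moreover have "cvx v - cvx u \<ge> (\<gamma> * d + \<alpha> * u) * (v - u)" by (rule cvx_above_tangent[OF U d True])
    moreover have "(1 - \<alpha>) / 2 * (v - u)\<^sup>2 > 0" using alpha_less_one that by simp
    ultimately show ?thesis using ou g_eq_G[OF True] unfolding obj_def by simp
  qed
  have "(THE w. \<forall>v. obj w \<le> obj v) = u"
  proof (rule the_equality)
    show "\<forall>v. obj u \<le> obj v" using strict by (metis order.order_iff_strict)
    show "w = u" if "\<forall>v. obj w \<le> obj v" for w
      using strict[of w] that by (metis not_le)
  qed
  then show ?thesis unfolding prox_def obj_def z_def by simp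
qed

lemma gradient_step_strongly_increasing:
  assumes U: "open U" "U \<subseteq> edom" "a \<in> U" "b \<in> U"
    and "DERIV G a :> da" "DERIV G b :> db" "a < b"
  shows "(b + \<gamma> * db) - (a + \<gamma> * da) \<ge> (1 - \<alpha>) * (b - a)"
proof -
  have "cvx b - cvx a \<ge> (\<gamma> * da + \<alpha> * a) * (b - a)"
    using cvx_above_tangent[OF U(1,2,3) assms(5)] U by auto
  moreover have "cvx a - cvx b \<ge> (\<gamma> * db + \<alpha> * b) * (a - b)"
    using cvx_above_tangent[OF U(1,2,4) assms(6)] U by auto
  ultimately have "0 \<le> (\<gamma> * db + \<alpha> * b - \<gamma> * da - \<alpha> * a) * (b - a)" by (simp add: algebra_simps)
  then have "0 \<le> \<gamma> * db + \<alpha> * b - \<gamma> * da - \<alpha> * a" using \<open>a < b\<close> by (simp add: zero_le_mult_iff)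
  then show ?thesis by (simp add: algebra_simps)
qed

lemma gradient_step_derivative_lower_bound:
  assumes U: "open U" "U \<subseteq> edom" "x \<in> U"
    and G1: "\<forall>x\<in>U. DERIV G x :> G1 x" and G2: "\<forall>x\<in>U. DERIV G1 x :> G2 x"
  shows "1 + \<gamma> * G2 x \<ge> 1 - \<alpha>"
proof -
  define q where "q y = y + \<gamma> * G1 y" for y
  have "DERIV q x :> 1 + \<gamma> * G2 x" unfolding q_def[abs_def]
    using G2 U(3) by (auto intro!: derivative_eq_intros)
  moreover have "\<forall>\<^sub>F y in at x. 1 - \<alpha> \<le> (q y - q x) / (y - x)"
    using eventually_at_in_open[OF U(1,3)]
  proof eventually_elim
    case (elim y)
    then have yU: "y \<in> U" by simp
    show ?case
    proof (cases "x < y")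
      case True
      then have "q y - q x \<ge> (1 - \<alpha>) * (y - x)" unfolding q_def
        using gradient_step_strongly_increasing[OF U(1,2,3) yU] G1 U(3) yU by auto
      then show ?thesis using True by (simp add: pos_le_divide_eq)
    next
      case False
      then have "y < x" using elim by auto
      then have "q x - q y \<ge> (1 - \<alpha>) * (x - y)" unfolding q_def
        using gradient_step_strongly_increasing[OF U(1,2) yU U(3)] G1 U(3) yU by auto
      moreover have "(q y - q x) / (y - x) = (q x - q y) / (x - y)"
        by (simp add: divide_simps) (simp add: algebra_simps)
      ultimately show ?thesis using \<open>y < x\<close> by (simp add: pos_le_divide_eq)
    qed
  qed
  ultimately show ?thesis by (rule has_field_derivative_lower_bound)
qed

text \<open>Near \<open>z\<^sub>0 = u\<^sub>0 + \<gamma> g'(u\<^sub>0)\<close> the proximal map is the inverse of the strictly increasing map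
  \<open>u \<mapsto> u + \<gamma> g'(u)\<close>, hence differentiable with derivative \<open>1 / (1 + \<gamma> g''(prox z))\<close>.\<close>

lemma prox_smooth_near_gradient_step:
  assumes U: "open U" "U \<subseteq> edom" "u0 \<in> U"
    and G1: "\<forall>x\<in>U. DERIV G x :> G1 x" and G2: "\<forall>x\<in>U. DERIV G1 x :> G2 x"
    and dG2: "G2 differentiable (at u0)"
  defines "p \<equiv> prox (\<lambda>v. ereal \<gamma> * g v)" and "z0 \<equiv> u0 + \<gamma> * G1 u0"
    and "p' \<equiv> \<lambda>z. inverse (1 + \<gamma> * G2 (prox (\<lambda>v. ereal \<gamma> * g v) z))"
  shows "p z0 = u0 \<and> 1 + \<gamma> * G2 u0 > 0 \<and> (\<forall>\<^sub>F z in nhds z0. DERIV p z :> p' z) \<and> p' differentiable (at z0)"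
proof -
  define q where "q y = y + \<gamma> * G1 y" for y
  have pos: "1 + \<gamma> * G2 y > 0" if "y \<in> U" for y
    using gradient_step_derivative_lower_bound[OF U(1,2) that G1 G2] alpha_less_one by linarith
  have pq: "p (q y) = y" if "y \<in> U" for y
    unfolding p_def q_def using prox_gradient_step[OF U(1,2) that] G1 that by auto
  obtain d where d: "d > 0" "cball u0 d \<subseteq> U" using U(1,3) open_contains_cball by blast
  then have sub: "{u0 - d..u0 + d} \<subseteq> U" by (auto simp: cball_def dist_real_def subset_iff)
  have dq: "DERIV q y :> 1 + \<gamma> * G2 y" if "y \<in> U" for y
    unfolding q_def[abs_def] using G2 that by (auto intro!: derivative_eq_intros)
  have q_inv: "\<forall>y\<in>{u0 - d..u0 + d}. DERIV q y :> 1 + \<gamma> * G2 y \<and> 1 + \<gamma> * G2 y \<noteq> 0 \<and> p (q y) = y"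
    using sub dq pos pq by (metis less_irrefl subsetD)
  have q_mono: "q y2 - q y1 \<ge> (1 - \<alpha>) * (y2 - y1)" if "y1 \<in> U" "y2 \<in> U" "y1 < y2" for y1 y2
    unfolding q_def using gradient_step_strongly_increasing[OF U(1,2) that(1,2) _ _ that(3)] G1 that by auto
  have "(1 - \<alpha>) * d > 0" using d alpha_less_one by simp
  moreover have "u0 - d \<in> U" "u0 + d \<in> U" using sub d by auto
  ultimately have "q (u0 - d) < q u0" "q u0 < q (u0 + d)"
    using q_mono[of "u0 - d" u0] q_mono[of u0 "u0 + d"] d U(3) by fastforce+
  then have "\<forall>\<^sub>F z in nhds z0. z \<in> {q (u0 - d)<..<q (u0 + d)}"
    unfolding z0_def q_def by (intro eventually_nhds_in_open) auto
  then have near: "\<forall>\<^sub>F z in nhds z0. p z \<in> U \<and> DERIV p z :> p' z"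
  proof eventually_elim
    case (elim z)
    then have "u0 - d < p z" "p z < u0 + d" "DERIV p z :> inverse (1 + \<gamma> * G2 (p z))"
      using has_field_derivative_left_inverse[OF _ q_inv] d(1) by auto
    then show ?case using sub unfolding p'_def p_def[symmetric] by auto
  qed
  have pz0: "p z0 = u0" using pq[OF U(3)] unfolding z0_def q_def .
  have "DERIV p z0 :> p' z0" using eventually_nhds_x_imp_x[OF near] by blast
  then have "p differentiable (at z0)" unfolding has_field_derivative_def differentiable_def by blast
  then have "(\<lambda>z. G2 (p z)) differentiable (at z0)"
    using differentiable_chain_at[of p z0 G2] dG2 pz0 by (simp add: o_def)
  then have "(\<lambda>z. 1 + \<gamma> * G2 (p z)) differentiable (at z0)"
    by (intro differentiable_add differentiable_mult differentiable_const)
  then have "p' differentiable (at z0)"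
    unfolding p'_def p_def[symmetric] using pos[OF U(3)] pz0 by (intro differentiable_inverse) auto
  then show ?thesis using pz0 pos[OF U(3)] near by (auto elim: eventually_mono)
qed

text \<open>On the generalized support the subdifferential is a singleton, which forces the subgradient
  \<open>v\<close> to be the derivative.\<close>

lemma prox_smooth_at_subgradient_step:
  assumes "\<exists>U. open U \<and> u0 \<in> U \<and> (\<forall>x\<in>U. g x \<noteq> \<infinity>) \<and> C3_on U (\<lambda>x. real_of_ereal (g x))"
    and "v \<in> fsubdiff g u0" and "\<exists>w. fsubdiff g u0 = {w}"
  defines "p \<equiv> prox (\<lambda>u. ereal \<gamma> * g u)" and "g2 \<equiv> deriv (deriv (\<lambda>x. real_of_ereal (g x))) u0"
  shows "p (u0 + \<gamma> * v) = u0 \<and> 1 + \<gamma> * g2 \<noteq> 0 \<and>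
    (\<exists>p'. (\<forall>\<^sub>F z in nhds (u0 + \<gamma> * v). DERIV p z :> p' z) \<and> p' differentiable (at (u0 + \<gamma> * v))
       \<and> p' (u0 + \<gamma> * v) = inverse (1 + \<gamma> * g2))"
proof -
  obtain U where U: "open U" "u0 \<in> U" "\<forall>x\<in>U. g x \<noteq> \<infinity>" and "C3_on U G"
    using assms(1) unfolding G_def[abs_def] by blast
  then obtain G1 G2 where G1: "\<forall>x\<in>U. DERIV G x :> G1 x" and G2: "\<forall>x\<in>U. DERIV G1 x :> G2 x"
    and dG2: "G2 differentiable (at u0)" and g2: "g2 = G2 u0"
    using C3_on_real_derivatives unfolding g2_def G_def[abs_def] by metis
  have "\<forall>x\<in>U. \<bar>g x\<bar> \<noteq> \<infinity>" using U(3) not_minf by auto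
  then have "G1 u0 \<in> fsubdiff g u0"
    using has_real_derivative_in_fsubdiff[OF U(1,2)] G1 U(2) unfolding G_def[abs_def] by blast
  then have "v = G1 u0" using assms(2,3) by auto
  moreover have "U \<subseteq> edom" using U(3) unfolding edom_def by auto
  ultimately show ?thesis
    using prox_smooth_near_gradient_step[OF U(1) _ U(2) G1 G2 dG2] unfolding p_def g2 by auto
qed

end

section \<open>The composed coordinate updates\<close>

lemma emb_restrict:
  assumes "inj js"
  shows "emb js bh (\<chi> t. bh $ js t) = bh"
  using assms by (simp add: emb_def vec_eq_iff f_inv_into_f)

lemma diff_gradient_at_compose_emb:
  fixes js :: "'s::finite \<Rightarrow> 'n::finite"
  assumes "inj js" and "diff_gradient_at h H (emb js bh x)"
  shows "diff_gradient_at (\<lambda>u. h (emb js bh u)) (\<lambda>y. \<chi> t. H (emb js bh y) $ js t) x"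
proof -
  define E :: "real^'s^'n" where "E = (\<chi> i t. if i = js t then 1 else 0)"
  have E_mult: "(E *v u) $ i = (if i \<in> range js then u $ inv js i else 0)" for u i
  proof (cases "i \<in> range js")
    case True
    then obtain t0 where "i = js t0" by blast
    then have "(E *v u) $ i = (\<Sum>t\<in>UNIV. (if t0 = t then 1 else 0) * u $ t)"
      unfolding E_def matrix_vector_mult_def using \<open>inj js\<close> by (simp add: inj_eq)
    also have "\<dots> = (\<Sum>t\<in>UNIV. if t0 = t then u $ t else 0)" by (rule sum.cong) auto
    finally have "(E *v u) $ i = u $ t0" by simp
    then show ?thesis using \<open>i = js t0\<close> \<open>inj js\<close> by simp
  next
    case False
    then have "\<And>t. i \<noteq> js t" by blast
    then show ?thesis using False unfolding E_def matrix_vector_mult_def by simp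
  qed
  have affine: "emb js bh u = E *v u + emb js bh 0" for u
    by (simp add: emb_def vec_eq_iff E_mult)
  have "(\<Sum>i\<in>UNIV. (if i = js t then 1 else 0) * w $ i) = (\<Sum>i\<in>UNIV. if i = js t then w $ i else 0)" for w :: "real^'n" and t
    by (rule sum.cong) auto
  then have "(transpose E *v w) = (\<chi> t. w $ js t)" for w
    by (simp add: vec_eq_iff E_def matrix_vector_mult_def transpose_def)
  then show ?thesis
    using diff_gradient_at_compose_affine[of h H E x "emb js bh 0"] assms(2) by (simp flip: affine)
qed

lemma Pmap_fixed_point_jacobian:
  fixes df :: "real^'n::finite \<Rightarrow> real^'n" and g :: "'n \<Rightarrow> real \<Rightarrow> ereal"
    and js :: "'s::finite \<Rightarrow> 'n"
  assumes wc: "weakly_convex (g (js s)) (\<gamma> (js s)) \<alpha>" and "inj js"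
    and g_C3: "\<exists>U. open U \<and> bh $ js s \<in> U \<and> (\<forall>x\<in>U. g (js s) x \<noteq> \<infinity>)
                 \<and> C3_on U (\<lambda>x. real_of_ereal (g (js s) x))"
    and crit: "(- df bh) $ js s \<in> fsubdiff (g (js s)) (bh $ js s)" and supp: "js s \<in> gsupp g bh"
    and df_smooth: "diff_gradient_at (\<lambda>z. df z $ js s) H bh"
  defines "\<beta>S \<equiv> \<chi> t. bh $ js t"
    and "g2 \<equiv> deriv (deriv (\<lambda>x. real_of_ereal (g (js s) x))) (bh $ js s)"
  shows "Pmap df g \<gamma> js bh s \<beta>S = \<beta>S \<and>
    (\<exists>J. diff_jacobian_at (Pmap df g \<gamma> js bh s) J \<beta>S \<and>
      J \<beta>S = row_update_matrix s (axis s 1 - (\<gamma> (js s) / (1 + \<gamma> (js s) * g2)) *\<^sub>R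
                   (\<chi> t. H bh $ js t + (if s = t then g2 else 0))))"
proof -
  interpret weakly_convex "g (js s)" "\<gamma> (js s)" \<alpha> by (rule wc)
  define p where "p = prox (\<lambda>v. ereal (\<gamma> (js s)) * g (js s) v)"
  define \<phi> where "\<phi> u = df (emb js bh u) $ js s" for u
  have emb_\<beta>S: "emb js bh \<beta>S = bh" unfolding \<beta>S_def by (rule emb_restrict[OF \<open>inj js\<close>])
  then have z0: "\<beta>S $ s - \<gamma> (js s) * \<phi> \<beta>S = bh $ js s + \<gamma> (js s) * (- df bh) $ js s"
    by (simp add: \<phi>_def \<beta>S_def)
  obtain p' where p_z0: "p (\<beta>S $ s - \<gamma> (js s) * \<phi> \<beta>S) = bh $ js s" and nz: "1 + \<gamma> (js s) * g2 \<noteq> 0"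
    and p': "\<forall>\<^sub>F z in nhds (\<beta>S $ s - \<gamma> (js s) * \<phi> \<beta>S). DERIV p z :> p' z"
      "p' differentiable (at (\<beta>S $ s - \<gamma> (js s) * \<phi> \<beta>S))"
      "p' (\<beta>S $ s - \<gamma> (js s) * \<phi> \<beta>S) = inverse (1 + \<gamma> (js s) * g2)"
    using prox_smooth_at_subgradient_step[OF g_C3 crit] supp unfolding z0 p_def g2_def gsupp_def by blast
  have Pmap_eq: "Pmap df g \<gamma> js bh s = (\<lambda>u. vupd u s (p (u $ s - \<gamma> (js s) * \<phi> u)))"
    by (rule ext) (simp add: Pmap_def p_def \<phi>_def)
  have "Pmap df g \<gamma> js bh s \<beta>S = \<beta>S"
    unfolding Pmap_eq p_z0 by (simp add: vupd_def vec_eq_iff \<beta>S_def)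
  moreover have "diff_gradient_at \<phi> (\<lambda>y. \<chi> t. H (emb js bh y) $ js t) \<beta>S"
    unfolding \<phi>_def by (rule diff_gradient_at_compose_emb[OF \<open>inj js\<close>]) (simp add: emb_\<beta>S df_smooth)
  from diff_jacobian_at_coordinate_step[OF this p'(1,2)]
  have "diff_jacobian_at (Pmap df g \<gamma> js bh s) (\<lambda>y. row_update_matrix s
      (p' (y $ s - \<gamma> (js s) * \<phi> y) *\<^sub>R (axis s 1 - \<gamma> (js s) *\<^sub>R (\<chi> t. H (emb js bh y) $ js t)))) \<beta>S"
    by (simp only: Pmap_eq)
  moreover have "p' (\<beta>S $ s - \<gamma> (js s) * \<phi> \<beta>S) *\<^sub>R (axis s 1 - \<gamma> (js s) *\<^sub>R (\<chi> t. H (emb js bh \<beta>S) $ js t))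
    = axis s 1 - (\<gamma> (js s) / (1 + \<gamma> (js s) * g2)) *\<^sub>R (\<chi> t. H bh $ js t + (if s = t then g2 else 0))"
    using inverse_scaleR_axis_minus_scaleR[OF nz, of s "\<chi> t. H bh $ js t"] by (simp add: p'(3) emb_\<beta>S)
  ultimately show ?thesis by auto
qed

lemma psi_map_jacobian_similar:
  fixes R :: "((real, 's::{finite,linorder}) vec, 's) vec"
  assumes "\<And>s. Pmap df g \<gamma> js bh s x = x \<and>
      (\<exists>J. diff_jacobian_at (Pmap df g \<gamma> js bh s) J x \<and> R ** J x = B s ** R)"
    and "invertible R"
  shows "twice_differentiable_at (psi_map df g \<gamma> js bh) x \<and>
    matrix (frechet_derivative (psi_map df g \<gamma> js bh) (at x))
      = matrix_inv R ** fold (\<lambda>s A. B s ** A) (sorted_list_of_set UNIV) (mat 1) ** R"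
proof -
  have "psi_map df g \<gamma> js bh = fold (Pmap df g \<gamma> js bh) (sorted_list_of_set UNIV)"
    by (rule ext) (simp add: psi_map_def)
  then obtain J where J: "diff_jacobian_at (psi_map df g \<gamma> js bh) J x"
    and RJ: "R ** J x = fold (\<lambda>s A. B s ** A) (sorted_list_of_set UNIV) (mat 1) ** R"
    using diff_jacobian_at_fold_similar[of "sorted_list_of_set UNIV" "Pmap df g \<gamma> js bh" x R B] assms(1)
    by auto
  have "J x = matrix_inv R ** (R ** J x)"
    using matrix_inv_left[OF assms(2)] by (simp add: matrix_mul_assoc)
  also have "\<dots> = matrix_inv R ** fold (\<lambda>s A. B s ** A) (sorted_list_of_set UNIV) (mat 1) ** R"
    by (simp only: RJ matrix_mul_assoc)
  finally show ?thesis using diff_jacobian_at_imp_twice_differentiable_at[OF J] by (simp only:)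
qed

theorem lemma1:
  fixes f :: "(real, 'n::{finite,linorder}) vec \<Rightarrow> real"
    and df :: "(real, 'n) vec \<Rightarrow> (real, 'n) vec"
    and g :: "'n \<Rightarrow> real \<Rightarrow> ereal"
    and L :: "'n \<Rightarrow> real"
    and \<beta>0 \<beta>h :: "(real, 'n) vec"
    and js :: "'s::{finite,linorder} \<Rightarrow> 'n"
  assumes f_convex: "convex_on UNIV f"
    and f_grad: "\<forall>x. (f has_derivative (\<lambda>h. df x \<bullet> h)) (at x)"
    and L_pos: "\<forall>j. 0 < L j"
    and coord_lip: "\<forall>x j h. \<bar>df (x + h *\<^sub>R axis j 1) $ j - df x $ j\<bar> \<le> L j * \<bar>h\<bar>"
    and g_proper: "\<forall>j. proper_fn (g j)"
    and g_closed: "\<forall>j. lsc_fn (g j)"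
    and g_lb: "\<forall>j. lower_bounded_fn (g j)"
    and g_weak: "\<exists>\<alpha><1. \<forall>j. ereal_convex (\<lambda>x. ereal (1 / L j) * g j x + ereal (\<alpha> / 2 * x\<^sup>2))"
    and cd_conv: "(\<lambda>k. (cd_epoch df g L ^^ k) \<beta>0) \<longlonglongrightarrow> \<beta>h"
    and critical: "- df \<beta>h \<in> fsubdiff (\<lambda>\<beta>. \<Sum>j\<in>UNIV. g j (\<beta> $ j)) \<beta>h"
    and js_enum: "strict_mono js" "range js = gsupp g \<beta>h"
    and nondeg: "\<forall>j. j \<notin> gsupp g \<beta>h \<longrightarrow> - (df \<beta>h $ j) \<in> interior (fsubdiff (g j) (\<beta>h $ j))"
    and f_C3: "\<exists>U. open U \<and> \<beta>h \<in> U \<and> C3_on U f"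
    and g_C3: "\<forall>j\<in>gsupp g \<beta>h. \<exists>U. open U \<and> \<beta>h $ j \<in> U \<and> (\<forall>x\<in>U. g j x \<noteq> \<infinity>)
                 \<and> C3_on U (\<lambda>x. real_of_ereal (g j x))"
    and M_pd: "pos_def_mat (\<chi> s t. matrix (frechet_derivative df (at \<beta>h)) $ js s $ js t
                 + (if s = t then deriv (deriv (\<lambda>x. real_of_ereal (g (js s) x))) (\<beta>h $ js s) else 0))"
  shows "let \<gamma> = (\<lambda>j. 1 / L j);
             g2 = (\<lambda>j. deriv (deriv (\<lambda>x. real_of_ereal (g j x))) (\<beta>h $ j));
             M = (\<chi> s t. matrix (frechet_derivative df (at \<beta>h)) $ js s $ js t
                   + (if s = t then g2 (js s) else 0)) :: ((real, 's) vec, 's) vec;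
             R = mat_sqrt M;
             B = (\<lambda>s. (\<chi> a b. R $ a $ s * (\<gamma> (js s) / (1 + \<gamma> (js s) * g2 (js s))) * R $ b $ s) :: ((real, 's) vec, 's) vec);
             \<psi> = psi_map df g \<gamma> js \<beta>h;
             \<beta>S = (\<chi> s. \<beta>h $ js s) :: (real, 's) vec
         in twice_differentiable_at \<psi> \<beta>S \<and>
            matrix (frechet_derivative \<psi> (at \<beta>S)) =
              matrix_inv R ** fold (\<lambda>s A. (mat 1 - B s) ** A) (sorted_list_of_set (UNIV :: 's set)) (mat 1) ** R"
proof -
  define \<gamma> where "\<gamma> = (\<lambda>j. 1 / L j)"
  obtain \<alpha> where "\<alpha> < 1" and "\<forall>j. ereal_convex (\<lambda>x. ereal (\<gamma> j) * g j x + ereal (\<alpha> / 2 * x\<^sup>2))"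
    using g_weak unfolding \<gamma>_def by blast
  then have convex: "weakly_convex (g j) (\<gamma> j) \<alpha>" for j
    using L_pos g_proper unfolding weakly_convex_def proper_fn_def \<gamma>_def by auto
  obtain H where H: "\<forall>j. diff_gradient_at (\<lambda>z. df z $ j) (H j) \<beta>h
      \<and> H j \<beta>h = matrix (frechet_derivative df (at \<beta>h)) $ j"
    using f_C3 f_grad C3_on_gradient_components by metis
  have "inj js" using js_enum(1) by (rule strict_mono_imp_inj_on)
  define g2 where "g2 = (\<lambda>j. deriv (deriv (\<lambda>x. real_of_ereal (g j x))) (\<beta>h $ j))"
  define M :: "((real, 's) vec, 's) vec" where "M = (\<chi> s t. matrix (frechet_derivative df (at \<beta>h)) $ js s $ js t
                   + (if s = t then g2 (js s) else 0))"
  define R where "R = mat_sqrt M"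
  define B :: "'s \<Rightarrow> ((real, 's) vec, 's) vec"
    where "B = (\<lambda>s. \<chi> a b. R $ a $ s * (\<gamma> (js s) / (1 + \<gamma> (js s) * g2 (js s))) * R $ b $ s)"
  define \<beta>S :: "(real, 's) vec" where "\<beta>S = (\<chi> s. \<beta>h $ js s)"
  have "pos_def_mat M" using M_pd unfolding M_def g2_def .
  then have R: "transpose R = R" "R ** R = M" "invertible R"
    using mat_sqrt_pos_semidef pos_def_imp_pos_semidef_mat invertible_mat_sqrt
    unfolding R_def pos_semidef_mat_def by blast+
  have step: "Pmap df g \<gamma> js \<beta>h s \<beta>S = \<beta>S \<and>
      (\<exists>J. diff_jacobian_at (Pmap df g \<gamma> js \<beta>h s) J \<beta>S \<and> R ** J \<beta>S = (mat 1 - B s) ** R)" for s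
  proof -
    have supp: "js s \<in> gsupp g \<beta>h" using js_enum(2) by blast
    have "M $ s = (\<chi> t. H (js s) \<beta>h $ js t + (if s = t then g2 (js s) else 0))"
      using H by (simp add: M_def vec_eq_iff)
    then have "Pmap df g \<gamma> js \<beta>h s \<beta>S = \<beta>S \<and> (\<exists>J. diff_jacobian_at (Pmap df g \<gamma> js \<beta>h s) J \<beta>S \<and>
        J \<beta>S = row_update_matrix s (axis s 1 - (\<gamma> (js s) / (1 + \<gamma> (js s) * g2 (js s))) *\<^sub>R (R ** R) $ s))"
      using Pmap_fixed_point_jacobian[where df = df and g = g and \<gamma> = \<gamma> and bh = \<beta>h and js = js and s = s,
          OF convex \<open>inj js\<close> g_C3[rule_format, OF supp] fsubdiff_separable_sum_component[OF critical] supp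
          H[THEN spec, THEN conjunct1]] R(2) unfolding \<beta>S_def g2_def by simp
    then show ?thesis using row_update_matrix_similar[OF R(1)] unfolding B_def by auto
  qed
  from psi_map_jacobian_similar[OF step R(3)]
  show ?thesis unfolding Let_def \<gamma>_def g2_def M_def R_def B_def \<beta>S_def .
qed

end
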